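(* In the bounded-domain setup, let $D_1=U\times(0,qR^2]$ and let $w\in C^{2,1}_{x,t}(D_1)\cap C(\overline{D_1})$ satisfy $\mathcal Lw\le0$ in $D_1$ and $w\le0$ on $\Gamma\times(0,qR^2)$. Then $$\max\{0,\sup_U w(x,qR^2)\}\le\frac1{1+\eta_0}\max\{0,\sup_U w(x,0)\}.$$
   Context: Setup. Fix $n\ge2$. For $i=1,2$: $g_i(s)=a^{(i)}_0+\sum_{j=1}^{N_i}a^{(i)}_js^{\alpha^{(i)}_j}$ ($s\ge0$), $a^{(i)}_0>0$, $a^{(i)}_j\ge0$, real $0<\alpha^{(i)}_1<\dots$; $G_i(u)=g_i(|u|)u$ ($u\in\mathbb R$). $f_1,f_2\in C([0,1])\cap C^1((0,1))$, $f_1(0)=0=f_2(1)$, $f_1'>0>f_2'$ on $(0,1)$; $p_c'\in C^1((0,1))$, $p_c'>0$; $F_i=1/(p_c'f_i)$. Fix $r_0>0$, $c_1,c_2$ with $c_1^2+c_2^2>0$, $s_0\in(0,1)$, and let $\hat S$ be the $C^1$ solution of $\hat S'=G_2(c_2r^{1-n})F_2(\hat S)-G_1(c_1r^{1-n})F_1(\hat S)$, $\hat S(r_0)=s_0$, $0<\hat S<1$, on its maximal interval $[r_0,R_{\max})$. For $r_0\le|x|<R_{\max}$: $S_*(x)=\hat S(|x|)$, $u_i^*(x)=c_i|x|^{-n}x$. For $u\in\mathbb R^n$: $\mathbf G_i(u)=g_i(|u|)u$, Jacobian $\mathbf G_i'(u)=g_i(|u|)I_n+g_i'(|u|)uu^T/|u|$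 ($=g_i(0)I_n$ at $u=0$). $B(x)=F_1(S_* )\mathbf G_1'(u_1^* )+F_2(S_* )\mathbf G_2'(u_2^* )$ (symmetric positive definite), $A=B^{-1}$, $b(x)=F_2'(S_* )\mathbf G_2(u_2^* )-F_1'(S_* )\mathbf G_1(u_1^* )$. Operator $\mathcal Lw=\partial_tw-\nabla\cdot(A\nabla w)-b\cdot(A\nabla w)$. $C^{2,1}_{x,t}$: continuous with continuous $x$-derivatives up to order 2 and $t$-derivative of order 1. Bounded-domain setup: fix $R\in(r_0,R_{\max})$ with $0<\underline s\le\hat S(r)\le\bar s<1$ on $[r_0,R]$; $U$ open bounded, $U\subset B_R\setminus\overline{B_{r_0}}$, $\Gamma=\partial U$. Constants: $d_0=\min\{g_1(0),g_2(0)\}$, $d_1=\sum_i g_i(|c_i|r_0^{1-n})$, $d_2=\sum_i g_i(|c_i|r_0^{1-n})|c_i|r_0^{1-n}$, $d_3=\sum_i g_i'(|c_i|r_0^{1-n})|c_i|r_0^{1-n}$ (terms with $c_i=0$ read as $0$), $d_4=d_1+d_3$; $\mu_1=\sum_i\max_{[\underline s,\bar s]}F_i$, $\mu_2=\sum_i\min_{[\underline s,\bar s]}F_i$, $\mu_3=\sum_i\max_{[\underline s,\bar s]}|F_i'|$; $C_0=d_4\mu_1$, $C_1=d_0\mu_2$, $C_2=d_2\mu_3$; $\kappa_0=C_0/(2C_1)$, $s_R=\kappa_0(n+C_2R)$, $q=\kappa_0C_0/(2s_R)$, $\eta_0=(r_0/R)^{2s_R}$. *)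

theory Defs
  imports "HOL-Analysis.Analysis"
begin

definition gpoly :: "(nat \<Rightarrow> real) \<Rightarrow> (nat \<Rightarrow> real) \<Rightarrow> nat \<Rightarrow> real \<Rightarrow> real" where
  "gpoly a al N s = a 0 + (\<Sum>j=1..N. a j * s powr al j)"

definition gpoly_deriv :: "(nat \<Rightarrow> real) \<Rightarrow> (nat \<Rightarrow> real) \<Rightarrow> nat \<Rightarrow> real \<Rightarrow> real" where
  "gpoly_deriv a al N s = (\<Sum>j=1..N. a j * al j * s powr (al j - 1))"

definition gpoly_admissible :: "(nat \<Rightarrow> real) \<Rightarrow> (nat \<Rightarrow> real) \<Rightarrow> nat \<Rightarrow> bool" where
  "gpoly_admissible a al N \<longleftrightarrow> a 0 > 0 \<and> (\<forall>j\<in>{1..N}. a j \<ge> 0)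
     \<and> (N \<ge> 1 \<longrightarrow> 0 < al 1) \<and> (\<forall>j\<in>{1..<N}. al j < al (Suc j))"

definition Gs :: "(real \<Rightarrow> real) \<Rightarrow> real \<Rightarrow> real" where
  "Gs g u = g \<bar>u\<bar> * u"

definition Gvec :: "(real \<Rightarrow> real) \<Rightarrow> real^'n \<Rightarrow> real^'n" where
  "Gvec g u = g (norm u) *\<^sub>R u"

definition outer :: "real^'n \<Rightarrow> real^'n \<Rightarrow> real^'n^'n" where
  "outer u v = (\<chi> i j. u $ i * v $ j)"

definition Gjac :: "(real \<Rightarrow> real) \<Rightarrow> (real \<Rightarrow> real) \<Rightarrow> real^'n \<Rightarrow> real^'n^'n" where
  "Gjac g g' u = (if u = 0 then g 0 *\<^sub>R mat 1
                  else g (norm u) *\<^sub>R mat 1 + (g' (norm u) / norm u) *\<^sub>R outer u u)"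

definition Ffun :: "(real \<Rightarrow> real) \<Rightarrow> (real \<Rightarrow> real) \<Rightarrow> real \<Rightarrow> real" where
  "Ffun pc' f s = 1 / (pc' s * f s)"

definition ustar :: "real \<Rightarrow> real^'n \<Rightarrow> real^'n" where
  "ustar c x = (c / norm x ^ CARD('n)) *\<^sub>R x"

definition gradx :: "(real^'n \<Rightarrow> real \<Rightarrow> real) \<Rightarrow> real^'n \<Rightarrow> real \<Rightarrow> real^'n" where
  "gradx w x t = (\<chi> i. frechet_derivative (\<lambda>y. w y t) (at x) (axis i 1))"

definition hessx :: "(real^'n \<Rightarrow> real \<Rightarrow> real) \<Rightarrow> real^'n \<Rightarrow> real \<Rightarrow> real^'n^'n" where
  "hessx w x t = (\<chi> i j. frechet_derivative (\<lambda>y. gradx w y t $ i) (at x) (axis j 1))"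

definition dtime :: "(real^'n \<Rightarrow> real \<Rightarrow> real) \<Rightarrow> real set \<Rightarrow> real^'n \<Rightarrow> real \<Rightarrow> real" where
  "dtime w I x t = vector_derivative (\<lambda>s. w x s) (at t within I)"

definition divg :: "(real^'n \<Rightarrow> real^'n) \<Rightarrow> real^'n \<Rightarrow> real" where
  "divg V x = (\<Sum>i\<in>UNIV. frechet_derivative V (at x) (axis i 1) $ i)"

definition C21 :: "(real^'n \<Rightarrow> real \<Rightarrow> real) \<Rightarrow> (real^'n) set \<Rightarrow> real \<Rightarrow> bool" where
  "C21 w U T \<longleftrightarrow>
     (\<forall>x\<in>U. \<forall>t\<in>{0<..T}. (\<lambda>y. w y t) differentiable (at x)
         \<and> (\<lambda>y. gradx w y t) differentiable (at x)
         \<and> (\<lambda>s. w x s) differentiable (at t within {0<..T}))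
   \<and> continuous_on (U \<times> {0<..T}) (\<lambda>(x,t). w x t)
   \<and> continuous_on (U \<times> {0<..T}) (\<lambda>(x,t). gradx w x t)
   \<and> continuous_on (U \<times> {0<..T}) (\<lambda>(x,t). hessx w x t)
   \<and> continuous_on (U \<times> {0<..T}) (\<lambda>(x,t). dtime w {0<..T} x t)"

definition Lop :: "(real^'n \<Rightarrow> real^'n^'n) \<Rightarrow> (real^'n \<Rightarrow> real^'n) \<Rightarrow> real \<Rightarrow>
                   (real^'n \<Rightarrow> real \<Rightarrow> real) \<Rightarrow> real^'n \<Rightarrow> real \<Rightarrow> real" where
  "Lop A b T w x t = dtime w {0<..T} x t
      - divg (\<lambda>y. A y *v gradx w y t) x - b x \<bullet> (A x *v gradx w x t)"

end

theory Submission
  imports Defs "HOL-Real_Asymp.Real_Asymp"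
begin

text \<open>
  The matrix B = F_1 G_1'(u_1*) + F_2 G_2'(u_2*) is radial, B = gam I + (eps/|x|^2) x x^T,
  so A = B^-1 is explicit (Sherman--Morrison), positive semidefinite, and has x as eigenvector with
  eigenvalue 1/beta, beta = gam + eps, where C1 <= beta <= C0; moreover |b| <= C2.  With the radial
  variable xi(r) = xi0 + int_{r0}^r beta(rho) rho drho and the profile tau^(-sR) exp(-xi/tau), the
  functions v(x,t) = M + epsilon (1 + t) + M cc [H(xi0, epsilon/kappa0) - H(xi(|x|), (t + epsilon)/kappa0)]
  are strict supersolutions of L that dominate w on the parabolic boundary when M = max{0, sup w(.,0)}.
  A weak comparison principle, proved from the first- and second-order conditions at an interior
  maximum, gives w <= v; at t = q R^2 this yields w <= M (1 - eta0) + o(1) as epsilon -> 0, and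
  1 - eta0 <= 1/(1 + eta0).
\<close>

lemma linear_functional_eq_inner:
  fixes D :: "real^'n \<Rightarrow> real"
  assumes "linear D"
  shows "D h = (\<chi> i. D (axis i 1)) \<bullet> h"
proof -
  have "D h = D (\<Sum>i\<in>UNIV. h$i *\<^sub>R axis i 1)"
    using basis_expansion[of h] by (simp add: scalar_mult_eq_scaleR)
  also have "\<dots> = (\<Sum>i\<in>UNIV. h$i * D (axis i 1))"
    using assms by (simp add: linear_sum linear_scale)
  also have "\<dots> = (\<chi> i. D (axis i 1)) \<bullet> h"
    by (simp add: inner_vec_def mult.commute)
  finally show ?thesis .
qed

lemma gradx_has_derivative:
  assumes "(\<lambda>y. w y t) differentiable (at x)"
  shows "((\<lambda>y. w y t) has_derivative (\<lambda>h. gradx w x t \<bullet> h)) (at x)"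
proof -
  have d: "((\<lambda>y. w y t) has_derivative frechet_derivative (\<lambda>y. w y t) (at x)) (at x)"
    using assms frechet_derivative_works by blast
  then have "linear (frechet_derivative (\<lambda>y. w y t) (at x))"
    using has_derivative_linear by blast
  then have "frechet_derivative (\<lambda>y. w y t) (at x) = (\<lambda>h. gradx w x t \<bullet> h)"
    unfolding gradx_def by (intro ext linear_functional_eq_inner)
  then show ?thesis using d by simp
qed

lemma gradx_unique:
  assumes "((\<lambda>y. w y t) has_derivative (\<lambda>h. G \<bullet> h)) (at x)"
  shows "gradx w x t = G"
proof -
  have "frechet_derivative (\<lambda>y. w y t) (at x) = (\<lambda>h. G \<bullet> h)"
    using assms frechet_derivative_at by metis
  then show ?thesis unfolding gradx_def by (simp add: vec_eq_iff inner_axis)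
qed

lemma has_derivative_along_line:
  assumes "(Z has_derivative (\<lambda>h. G \<bullet> h)) (at (x + s *\<^sub>R e))"
  shows "((\<lambda>s. Z (x + s *\<^sub>R e)) has_real_derivative (G \<bullet> e)) (at s)"
proof -
  have "((\<lambda>s::real. x + s *\<^sub>R e) has_derivative (\<lambda>s. s *\<^sub>R e)) (at s)"
    by (auto intro!: derivative_eq_intros)
  from diff_chain_at[OF this assms] show ?thesis
    by (simp add: has_real_derivative_iff_has_vector_derivative has_vector_derivative_def o_def algebra_simps)
qed

text \<open>Otherwise the directional derivative of Z along a
  direction e with e . f e > 0 would become positive right after x, and Z would increase.\<close>
lemma second_order_max_condition:
  fixes Z :: "real^'n \<Rightarrow> real"
  assumes U: "open U" "x \<in> U" and mx: "\<forall>y\<in>U. Z y \<le> Z x"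
    and dZ: "\<forall>y\<in>U. (Z has_derivative (\<lambda>h. Gz y \<bullet> h)) (at y)"
    and dG: "(Gz has_derivative f) (at x)" and G0: "Gz x = 0"
  shows "e \<bullet> f e \<le> 0"
proof (rule ccontr)
  assume "\<not> e \<bullet> f e \<le> 0"
  then have c: "f e \<bullet> e > 0" by (simp add: inner_commute)
  obtain d where d: "d > 0" "\<And>s. \<bar>s\<bar> \<le> d \<Longrightarrow> x + s *\<^sub>R e \<in> U"
  proof -
    obtain r where r: "r > 0" "ball x r \<subseteq> U" using U open_contains_ball by blast
    have ne: "norm e + 1 > 0" by (simp add: add_nonneg_pos)
    have "x + s *\<^sub>R e \<in> U" if "\<bar>s\<bar> \<le> r / (norm e + 1)" for s
    proof -
      have "norm (s *\<^sub>R e) \<le> r / (norm e + 1) * norm e" using mult_right_mono[OF that norm_ge_zero] by simp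
      also have "\<dots> < r" using r ne by (simp add: field_simps)
      finally show ?thesis using r(2) by (auto simp: dist_norm)
    qed
    then show thesis using r ne by (intro that[of "r / (norm e + 1)"]) auto
  qed
  have dpsi: "((\<lambda>s. Gz (x + s *\<^sub>R e) \<bullet> e) has_real_derivative (f e \<bullet> e)) (at 0)"
  proof -
    have "((\<lambda>s::real. x + s *\<^sub>R e) has_derivative (\<lambda>s. s *\<^sub>R e)) (at 0)"
      by (auto intro!: derivative_eq_intros)
    from diff_chain_at[OF this] dG
    have "((\<lambda>s. Gz (x + s *\<^sub>R e)) has_derivative (\<lambda>s. f (s *\<^sub>R e))) (at 0)"
      by (simp add: o_def)
    then have "((\<lambda>s. Gz (x + s *\<^sub>R e) \<bullet> e) has_derivative (\<lambda>s. f (s *\<^sub>R e) \<bullet> e)) (at 0)"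
      by (rule bounded_linear.has_derivative[OF bounded_linear_inner_left])
    moreover have "linear f" using dG has_derivative_linear by blast
    ultimately show ?thesis
      by (simp add: has_real_derivative_iff_has_vector_derivative has_vector_derivative_def linear_scale)
  qed
  have dphi: "((\<lambda>s. Z (x + s *\<^sub>R e)) has_real_derivative (Gz (x + s *\<^sub>R e) \<bullet> e)) (at s)"
    if "\<bar>s\<bar> \<le> d" for s
    using dZ d(2)[OF that] by (blast intro: has_derivative_along_line)
  obtain d2 where d2: "d2 > 0" "\<forall>h>0. h < d2 \<longrightarrow> Gz (x + 0 *\<^sub>R e) \<bullet> e < Gz (x + (0 + h) *\<^sub>R e) \<bullet> e"
    using DERIV_pos_inc_right[OF dpsi c] by blast
  define s1 where "s1 = min d (d2 / 2)"
  have s1: "s1 > 0" "s1 \<le> d" "s1 < d2" using d d2 by (auto simp: s1_def)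
  obtain z where z: "z > 0" "z < s1" "Z (x + s1 *\<^sub>R e) - Z (x + 0 *\<^sub>R e) = (s1 - 0) * (Gz (x + z *\<^sub>R e) \<bullet> e)"
    using MVT2[of 0 s1 "\<lambda>s. Z (x + s *\<^sub>R e)" "\<lambda>s. Gz (x + s *\<^sub>R e) \<bullet> e"] s1 dphi by auto
  have "Gz (x + z *\<^sub>R e) \<bullet> e > 0" using d2(2)[rule_format, of z] z s1 G0 by simp
  then have "Z (x + s1 *\<^sub>R e) > Z x" using z s1 by (simp add: algebra_simps)
  moreover have "Z (x + s1 *\<^sub>R e) \<le> Z x" using mx d(2)[of s1] s1 by auto
  ultimately show False by simp
qed


text \<open>First-order condition in time: at a maximum over (0,T] the one-sided derivative is nonnegative
  (the maximum may sit at the right end point T).\<close>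
lemma left_derivative_nonneg_at_max:
  fixes f :: "real \<Rightarrow> real"
  assumes d: "(f has_real_derivative l) (at t within {0<..T})" and t: "0 < t" "t \<le> T"
    and mx: "\<forall>s\<in>{0<..T}. f s \<le> f t"
  shows "l \<ge> 0"
proof (rule ccontr)
  assume "\<not> l \<ge> 0"
  then obtain d where d: "d > 0" "\<forall>h>0. t - h \<in> {0<..T} \<longrightarrow> h < d \<longrightarrow> f t < f (t - h)"
    using has_real_derivative_neg_dec_left[OF d] by fastforce
  define h where "h = min d t / 2"
  have h: "h > 0" "h < d" "t - h \<in> {0<..T}" using d t by (auto simp: h_def)
  then show False using d mx by fastforce
qed

text \<open>The entrywise l1 norm of a matrix, a convenient bound for the operator norm.\<close>
definition entry_norm :: "real^'m^'k \<Rightarrow> real" where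
  "entry_norm B = (\<Sum>i\<in>UNIV. \<Sum>j\<in>UNIV. \<bar>B $ i $ j\<bar>)"

lemma entry_norm_nonneg: "entry_norm B \<ge> 0"
  unfolding entry_norm_def by (intro sum_nonneg) auto

lemma norm_matrix_vector_le: "norm (B *v u) \<le> entry_norm B * norm u"
  using onorm[OF matrix_vector_mul_bounded_linear, of B u] onorm_le_matrix_component_sum[of B]
  unfolding entry_norm_def by (meson mult_right_mono norm_ge_zero order_trans)

lemma matrix_product_linearisation_error:
  fixes A :: "'a::real_normed_vector \<Rightarrow> real^'m^'k" and g :: "'a \<Rightarrow> real^'m"
  assumes "g x = 0"
  shows "norm (A y *v g y - A x *v g x - A x *v g' (y - x))
    \<le> entry_norm (A y - A x) * norm (g y) + entry_norm (A x) * norm (g y - g x - g' (y - x))"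
proof -
  have "A y *v g y - A x *v g x - A x *v g' (y - x) = (A y - A x) *v g y + A x *v (g y - g x - g' (y - x))"
    using assms by (simp add: matrix_vector_mult_diff_rdistrib matrix_vector_mult_diff_distrib)
  then have "norm (A y *v g y - A x *v g x - A x *v g' (y - x))
      \<le> norm ((A y - A x) *v g y) + norm (A x *v (g y - g x - g' (y - x)))"
    by (simp only: norm_triangle_ineq)
  then show ?thesis
    using norm_matrix_vector_le[of "A y - A x" "g y"] norm_matrix_vector_le[of "A x" "g y - g x - g' (y - x)"]
    by linarith
qed

text \<open>Product rule for y \<mapsto> A(y) g(y) at a zero of g, where A need only be continuous.  This
  lets the comparison principle avoid any differentiability assumption on the coefficients.\<close>
lemma has_derivative_continuous_mult_vanishing:
  fixes A :: "real^'n \<Rightarrow> real^'m^'k" and g :: "real^'n \<Rightarrow> real^'m"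
  assumes Ac: "continuous (at x) A" and gd: "(g has_derivative g') (at x)" and g0: "g x = 0"
  shows "((\<lambda>y. A y *v g y) has_derivative (\<lambda>e. A x *v g' e)) (at x)"
proof -
  have "bounded_linear g'" using gd has_derivative_bounded_linear by blast
  then obtain K where K: "K > 0" "\<And>h. norm (g' h) \<le> norm h * K"
    using bounded_linear.pos_bounded by blast
  have bl: "bounded_linear (\<lambda>e. A x *v g' e)"
    using \<open>bounded_linear g'\<close> by (rule bounded_linear_compose[OF matrix_vector_mul_bounded_linear])
  have S: "((\<lambda>y. entry_norm (A y - A x)) \<longlongrightarrow> 0) (at x)"
  proof -
    have "((\<lambda>y. entry_norm (A y - A x)) \<longlongrightarrow> entry_norm (A x - A x)) (at x)"
      using Ac unfolding continuous_at entry_norm_def by (intro tendsto_intros)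
    then show ?thesis by (simp add: entry_norm_def)
  qed
  have gd2: "\<forall>e>0. eventually (\<lambda>y. norm (g y - g x - g' (y - x)) \<le> e * norm (y - x)) (at x)"
    using gd unfolding has_derivative_within_alt2 by (rule conjunct2)
  show ?thesis
    unfolding has_derivative_within_alt2
  proof (rule conjI[OF bl], intro allI impI)
    fix e :: real assume e: "e > 0"
    define Sx where "Sx = entry_norm (A x)"
    have Sx0: "Sx \<ge> 0" unfolding Sx_def by (rule entry_norm_nonneg)
    have e1: "e / (2 * (Sx + 1)) > 0" using e Sx0 by simp
    have "eventually (\<lambda>y. norm (g y - g x - g' (y - x)) \<le> 1 * norm (y - x)) (at x)"
      and "eventually (\<lambda>y. norm (g y - g x - g' (y - x)) \<le> (e / (2 * (Sx + 1))) * norm (y - x)) (at x)"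
      using gd2[rule_format, of 1] gd2[rule_format, OF e1] by simp_all
    moreover have "eventually (\<lambda>y. entry_norm (A y - A x) < e / (2 * (K + 1))) (at x)"
      using S e K by (intro order_tendstoD(2)) auto
    ultimately show "eventually (\<lambda>y. norm (A y *v g y - A x *v g x - A x *v g' (y - x)) \<le> e * norm (y - x)) (at x)"
    proof eventually_elim
      case (elim y)
      have gy: "norm (g y) \<le> (K + 1) * norm (y - x)"
        using g0 norm_triangle_ineq[of "g y - g x - g' (y - x)" "g' (y - x)"] elim(1) K(2)[of "y - x"]
        by (simp add: algebra_simps)
      have "norm (A y *v g y - A x *v g x - A x *v g' (y - x))
          \<le> (e / (2 * (K + 1))) * ((K + 1) * norm (y - x)) + (Sx + 1) * ((e / (2 * (Sx + 1))) * norm (y - x))"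
        using matrix_product_linearisation_error[where A = A and g = g and x = x and y = y and g' = g', OF g0] elim(2,3) gy K e1 Sx0
          entry_norm_nonneg[of "A y - A x"] unfolding Sx_def[symmetric]
        by (smt (verit, best) mult_mono mult_right_mono norm_ge_zero)
      also have "\<dots> = e * norm (y - x)"
      proof -
        have "(e / (2 * (K + 1))) * ((K + 1) * norm (y - x)) = e * norm (y - x) / 2"
          using K by (simp add: field_simps)
        moreover have "(Sx + 1) * ((e / (2 * (Sx + 1))) * norm (y - x)) = e * norm (y - x) / 2"
          using Sx0 by (simp add: field_simps)
        ultimately show ?thesis by (simp only: field_sum_of_halves)
      qed
      finally show ?case .
    qed
  qed
qed

text \<open>The ellipticity property used by the comparison principle: the trace of A H is
  nonpositive for every negative semidefinite linear map H (this holds for A positive semidefinite).\<close>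
definition nsd_trace_nonpos :: "real^'n^'n \<Rightarrow> bool" where
  "nsd_trace_nonpos A \<longleftrightarrow> (\<forall>f. linear f \<longrightarrow> (\<forall>e. e \<bullet> f e \<le> 0) \<longrightarrow> (\<Sum>i\<in>UNIV. (A *v f (axis i 1)) $ i) \<le> 0)"

definition diff21 :: "(real^'n \<Rightarrow> real \<Rightarrow> real) \<Rightarrow> (real^'n) set \<Rightarrow> real \<Rightarrow> bool" where
  "diff21 w U T \<longleftrightarrow> (\<forall>x\<in>U. \<forall>t\<in>{0<..T}. (\<lambda>y. w y t) differentiable (at x)
      \<and> (\<lambda>y. gradx w y t) differentiable (at x) \<and> (\<lambda>s. w x s) differentiable (at t within {0<..T}))"

lemma C21_imp_diff21: "C21 w U T \<Longrightarrow> diff21 w U T"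
  unfolding C21_def diff21_def by blast

text \<open>At an interior maximum of w - v at time t the gradients agree and the divergence of the
  flux A grad w is at most that of A grad v: their difference is tr(A H) with H = D(grad w - grad v)
  negative semidefinite by the second-order condition.\<close>
lemma flux_divergence_le_at_max:
  fixes A :: "real^'n \<Rightarrow> real^'n^'n"
  assumes U: "open U" "x \<in> U"
    and mx: "\<forall>y\<in>U. w y t - v y t \<le> w x t - v x t"
    and dw: "\<forall>y\<in>U. (\<lambda>y. w y t) differentiable (at y)" "(\<lambda>y. gradx w y t) differentiable (at x)"
    and dv: "\<forall>y\<in>U. (\<lambda>y. v y t) differentiable (at y)" "(\<lambda>y. gradx v y t) differentiable (at x)"
    and Ac: "continuous (at x) A" and Atr: "nsd_trace_nonpos (A x)"
    and Avd: "(\<lambda>y. A y *v gradx v y t) differentiable (at x)"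
  shows "gradx w x t = gradx v x t"
    and "divg (\<lambda>y. A y *v gradx w y t) x \<le> divg (\<lambda>y. A y *v gradx v y t) x"
proof -
  define Gz where "Gz = (\<lambda>y. gradx w y t - gradx v y t)"
  have dZ: "\<forall>y\<in>U. ((\<lambda>y. w y t - v y t) has_derivative (\<lambda>h. Gz y \<bullet> h)) (at y)"
  proof
    fix y assume "y \<in> U"
    then have "((\<lambda>y. w y t - v y t) has_derivative (\<lambda>h. gradx w y t \<bullet> h - gradx v y t \<bullet> h)) (at y)"
      using dw(1) dv(1) by (intro has_derivative_diff gradx_has_derivative) auto
    then show "((\<lambda>y. w y t - v y t) has_derivative (\<lambda>h. Gz y \<bullet> h)) (at y)"
      unfolding Gz_def by (simp add: inner_diff_left)
  qed
  have "(\<lambda>h. Gz x \<bullet> h) = (\<lambda>h. 0)"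
    using differential_zero_maxmin[OF U(2,1) dZ[rule_format, OF U(2)]] mx by blast
  then have "Gz x \<bullet> Gz x = 0" by metis
  then have G0: "Gz x = 0" by simp
  then show "gradx w x t = gradx v x t" unfolding Gz_def by simp
  obtain Dw Dv where hw: "((\<lambda>y. gradx w y t) has_derivative Dw) (at x)"
    and hv: "((\<lambda>y. gradx v y t) has_derivative Dv) (at x)"
    using dw(2) dv(2) unfolding differentiable_def by blast
  define fz where "fz = (\<lambda>e. Dw e - Dv e)"
  have hz: "(Gz has_derivative fz) (at x)" unfolding Gz_def fz_def
    by (rule has_derivative_diff[OF hw hv])
  have "linear fz" using hz has_derivative_linear by blast
  moreover have "\<forall>e. e \<bullet> fz e \<le> 0"
    using second_order_max_condition[OF U(1,2) _ dZ hz G0] mx by blast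
  ultimately have tr: "(\<Sum>i\<in>UNIV. (A x *v fz (axis i 1)) $ i) \<le> 0"
    using Atr unfolding nsd_trace_nonpos_def by blast
  txt \<open>Write the flux of w as the flux of v plus A times the vanishing gradient difference.\<close>
  obtain DP where hP: "((\<lambda>y. A y *v gradx v y t) has_derivative DP) (at x)"
    using Avd unfolding differentiable_def by blast
  have "((\<lambda>y. A y *v Gz y + A y *v gradx v y t) has_derivative (\<lambda>e. A x *v fz e + DP e)) (at x)"
    using has_derivative_continuous_mult_vanishing[OF Ac hz G0] hP by (rule has_derivative_add)
  then have "((\<lambda>y. A y *v gradx w y t) has_derivative (\<lambda>e. A x *v fz e + DP e)) (at x)"
    unfolding Gz_def by (simp add: matrix_vector_mult_diff_distrib)
  then have "divg (\<lambda>y. A y *v gradx w y t) x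
      = (\<Sum>i\<in>UNIV. (A x *v fz (axis i 1)) $ i) + divg (\<lambda>y. A y *v gradx v y t) x"
    using hP unfolding divg_def by (simp add: frechet_derivative_at[symmetric] sum.distrib)
  with tr show "divg (\<lambda>y. A y *v gradx w y t) x \<le> divg (\<lambda>y. A y *v gradx v y t) x" by simp
qed

lemma dtime_le_at_max:
  assumes t: "t \<in> {0<..T}" and mx: "\<forall>s\<in>{0<..T}. w x s - v x s \<le> w x t - v x t"
    and dw: "(\<lambda>s. w x s) differentiable (at t within {0<..T})"
    and dv: "(\<lambda>s. v x s) differentiable (at t within {0<..T})"
  shows "dtime v {0<..T} x t \<le> dtime w {0<..T} x t"
proof -
  have "((\<lambda>s. w x s) has_real_derivative dtime w {0<..T} x t) (at t within {0<..T})"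
    and "((\<lambda>s. v x s) has_real_derivative dtime v {0<..T} x t) (at t within {0<..T})"
    using dw dv unfolding dtime_def has_real_derivative_iff_has_vector_derivative
    by (auto intro: vector_derivative_works[THEN iffD1])
  from DERIV_diff[OF this] have "dtime w {0<..T} x t - dtime v {0<..T} x t \<ge> 0"
    by (rule left_derivative_nonneg_at_max) (use t mx in auto)
  then show ?thesis by simp
qed

lemma Lop_le_at_max:
  fixes A :: "real^'n \<Rightarrow> real^'n^'n"
  assumes U: "open U" "x \<in> U" and t: "t \<in> {0<..T}"
    and mxs: "\<forall>y\<in>U. w y t - v y t \<le> w x t - v x t"
    and mxt: "\<forall>s\<in>{0<..T}. w x s - v x s \<le> w x t - v x t"
    and dw: "diff21 w U T" and dv: "diff21 v U T"
    and Ac: "continuous (at x) A" and Atr: "nsd_trace_nonpos (A x)"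
    and Avd: "(\<lambda>y. A y *v gradx v y t) differentiable (at x)"
  shows "Lop A b T v x t \<le> Lop A b T w x t"
proof -
  have w: "\<forall>y\<in>U. (\<lambda>y. w y t) differentiable (at y)" "(\<lambda>y. gradx w y t) differentiable (at x)"
      "(\<lambda>s. w x s) differentiable (at t within {0<..T})"
    and v: "\<forall>y\<in>U. (\<lambda>y. v y t) differentiable (at y)" "(\<lambda>y. gradx v y t) differentiable (at x)"
      "(\<lambda>s. v x s) differentiable (at t within {0<..T})"
    using dw dv U(2) t unfolding diff21_def by blast+
  have "gradx w x t = gradx v x t"
    and "divg (\<lambda>y. A y *v gradx w y t) x \<le> divg (\<lambda>y. A y *v gradx v y t) x"
    using flux_divergence_le_at_max[OF U mxs w(1,2) v(1,2) Ac Atr Avd] by blast+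
  moreover have "dtime v {0<..T} x t \<le> dtime w {0<..T} x t"
    using dtime_le_at_max[where w = w and v = v and x = x, OF t mxt w(3) v(3)] .
  ultimately show ?thesis unfolding Lop_def by simp
qed

lemma comparison_principle:
  fixes U :: "(real^'n) set" and w v :: "real^'n \<Rightarrow> real \<Rightarrow> real"
    and A :: "real^'n \<Rightarrow> real^'n^'n" and b :: "real^'n \<Rightarrow> real^'n"
  assumes U: "open U" "bounded U" and T: "T > 0"
    and cont: "continuous_on (closure U \<times> {0..T}) (\<lambda>(x,t). w x t - v x t)"
    and init: "\<forall>x\<in>closure U. w x 0 \<le> v x 0"
    and bdry: "\<forall>x\<in>frontier U. \<forall>t\<in>{0<..T}. w x t \<le> v x t"
    and dw: "diff21 w U T" and dv: "diff21 v U T"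
    and Ac: "\<forall>x\<in>U. continuous (at x) A" and Atr: "\<forall>x\<in>U. nsd_trace_nonpos (A x)"
    and Avd: "\<forall>x\<in>U. \<forall>t\<in>{0<..T}. (\<lambda>y. A y *v gradx v y t) differentiable (at x)"
    and Lw: "\<forall>x\<in>U. \<forall>t\<in>{0<..T}. Lop A b T w x t \<le> 0"
    and Lv: "\<forall>x\<in>U. \<forall>t\<in>{0<..T}. Lop A b T v x t > 0"
  shows "\<forall>x\<in>closure U. \<forall>t\<in>{0..T}. w x t \<le> v x t"
proof (cases "U = {}")
  case True then show ?thesis by simp
next
  case False
  have "compact (closure U \<times> {0..T})" using U by (intro compact_Times) (auto simp: compact_closure)
  moreover have "closure U \<times> {0..T} \<noteq> {}" using False T by auto
  ultimately obtain x t where xt: "x \<in> closure U" "t \<in> {0..T}"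
    and mx: "\<forall>y\<in>closure U. \<forall>s\<in>{0..T}. w y s - v y s \<le> w x t - v x t"
    using continuous_attains_sup[OF _ _ cont] by fastforce
  have max_nonpos: "w x t - v x t \<le> 0"
  proof (cases "t = 0")
    case True then show ?thesis using init xt by simp
  next
    case False
    then have t: "t \<in> {0<..T}" using xt by auto
    show ?thesis
    proof (cases "x \<in> U")
      case False
      then have "x \<in> frontier U" using xt U(1) by (simp add: frontier_def interior_open)
      then show ?thesis using bdry t by simp
    next
      case True
      have mxs: "\<forall>y\<in>U. w y t - v y t \<le> w x t - v x t" using mx xt(2) closure_subset by blast
      have mxt: "\<forall>s\<in>{0<..T}. w x s - v x s \<le> w x t - v x t" using mx xt(1) by simp
      have "Lop A b T v x t \<le> Lop A b T w x t"
        using Lop_le_at_max[OF U(1) True t mxs mxt dw dv] Ac Atr Avd True t by blast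
      then show ?thesis using Lw Lv True t by force
    qed
  qed
  show ?thesis
  proof (intro ballI)
    fix y s assume "y \<in> closure U" "s \<in> {0..T}"
    then have "w y s - v y s \<le> 0" using mx max_nonpos by force
    then show "w y s \<le> v y s" by simp
  qed
qed

lemma outer_mult_vec: "outer y y *v u = (y \<bullet> u) *\<^sub>R (y::real^'n)"
  by (simp add: vec_eq_iff outer_def matrix_vector_mult_def inner_vec_def sum_distrib_left
      mult.commute mult.left_commute)

lemma rank_one_update_mult_vec:
  "(\<gamma> *\<^sub>R mat 1 + \<eta> *\<^sub>R outer y y) *v u = \<gamma> *\<^sub>R u + (\<eta> * (y \<bullet> u)) *\<^sub>R (y::real^'n)"
  by (simp add: matrix_vector_mult_add_rdistrib outer_mult_vec scaleR_matrix_vector_assoc[symmetric])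

lemma matrix_inv_eq_right_inverse:
  fixes A B :: "real^'n^'n"
  assumes AB: "A ** B = mat 1"
  shows "matrix_inv A = B"
proof -
  have "\<exists>A'. A ** A' = mat 1 \<and> A' ** A = mat 1"
    using AB matrix_left_right_inverse by blast
  then have X: "A ** matrix_inv A = mat 1 \<and> matrix_inv A ** A = mat 1"
    unfolding matrix_inv_def by (rule someI_ex)
  have "matrix_inv A = matrix_inv A ** (A ** B)" using AB by simp
  also have "\<dots> = (matrix_inv A ** A) ** B" by (simp add: matrix_mul_assoc)
  also have "\<dots> = B" using X by simp
  finally show ?thesis .
qed

lemma matrix_inv_rank_one_update:
  fixes y :: "real^'n"
  assumes g: "\<gamma> > 0" and e: "\<eta> \<ge> 0"
  shows "matrix_inv (\<gamma> *\<^sub>R mat 1 + \<eta> *\<^sub>R outer y y)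
       = (1/\<gamma>) *\<^sub>R (mat 1 - (\<eta> / (\<gamma> + \<eta> * (y \<bullet> y))) *\<^sub>R outer y y)"
proof (rule matrix_inv_eq_right_inverse, unfold matrix_eq, intro allI)
  fix u
  define k where "k = \<eta> / (\<gamma> + \<eta> * (y \<bullet> y))"
  have den: "\<gamma> + \<eta> * (y \<bullet> y) > 0" using g e by (simp add: add_pos_nonneg)
  have "(\<gamma> *\<^sub>R mat 1 + \<eta> *\<^sub>R outer y y) ** ((1/\<gamma>) *\<^sub>R (mat 1 - k *\<^sub>R outer y y)) *v u
      = (\<gamma> *\<^sub>R mat 1 + \<eta> *\<^sub>R outer y y) *v ((1/\<gamma>) *\<^sub>R (u - (k * (y \<bullet> u)) *\<^sub>R y))"
    by (simp add: matrix_vector_mul_assoc[symmetric] matrix_vector_mult_diff_rdistrib outer_mult_vec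
        scaleR_matrix_vector_assoc[symmetric])
  also have "\<dots> = u + ((\<eta> - k * (\<gamma> + \<eta> * (y \<bullet> y))) / \<gamma> * (y \<bullet> u)) *\<^sub>R y"
    unfolding rank_one_update_mult_vec using g
    by (simp add: algebra_simps inner_diff_right diff_divide_distrib add_divide_distrib scaleR_diff_left)
  also have "\<eta> - k * (\<gamma> + \<eta> * (y \<bullet> y)) = 0" unfolding k_def using den by simp
  finally show "(\<gamma> *\<^sub>R mat 1 + \<eta> *\<^sub>R outer y y) ** ((1/\<gamma>) *\<^sub>R (mat 1 - k *\<^sub>R outer y y)) *v u
      = mat 1 *v u" by simp
qed

lemma linear_inner_expand:
  fixes y :: "real^'n"
  assumes "linear f"
  shows "y \<bullet> f y = (\<Sum>i\<in>UNIV. y $ i * (y \<bullet> f (axis i 1)))"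
proof -
  have "f y = f (\<Sum>i\<in>UNIV. (y $ i) *\<^sub>R axis i 1)"
    using basis_expansion[of y] by (simp add: scalar_mult_eq_scaleR)
  also have "\<dots> = (\<Sum>i\<in>UNIV. (y $ i) *\<^sub>R f (axis i 1))"
    using assms by (simp add: linear_sum linear_scale)
  finally show ?thesis by (simp add: inner_sum_right)
qed

text \<open>For a negative semidefinite linear map f: |y|^2 tr f <= y . f y.  Summing the
  quadratic form over the vectors y_i e_j - y_j e_i gives twice the difference.\<close>
lemma nsd_trace_rank_one_bound:
  fixes y :: "real^'n" and f :: "real^'n \<Rightarrow> real^'n"
  assumes lin: "linear f" and nsd: "\<forall>e. e \<bullet> f e \<le> 0"
  shows "(y \<bullet> y) * (\<Sum>i\<in>UNIV. axis i 1 \<bullet> f (axis i 1)) \<le> y \<bullet> f y"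
proof -
  define e where "e i = (axis i (1::real) :: real^'n)" for i
  define Q where "Q i j = e i \<bullet> f (e j)" for i j
  have quad: "(y$i *\<^sub>R e j - y$j *\<^sub>R e i) \<bullet> f (y$i *\<^sub>R e j - y$j *\<^sub>R e i)
     = y$i * y$i * Q j j - y$i * y$j * Q j i - y$i * y$j * Q i j + y$j * y$j * Q i i" for i j
    using lin unfolding Q_def
    by (simp add: linear_diff linear_scale inner_diff_left inner_diff_right algebra_simps)
  have diag: "(\<Sum>i\<in>UNIV. \<Sum>j\<in>UNIV. y$i * y$i * Q j j) = (y \<bullet> y) * (\<Sum>i\<in>UNIV. Q i i)"
    by (simp add: inner_vec_def sum_distrib_left[symmetric] sum_distrib_right[symmetric])
  then have diag': "(\<Sum>i\<in>UNIV. \<Sum>j\<in>UNIV. y$j * y$j * Q i i) = (y \<bullet> y) * (\<Sum>i\<in>UNIV. Q i i)"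
    by (subst sum.swap) simp
  have off: "(\<Sum>i\<in>UNIV. \<Sum>j\<in>UNIV. y$i * y$j * Q j i) = y \<bullet> f y"
  proof -
    have "(\<Sum>i\<in>UNIV. \<Sum>j\<in>UNIV. y$i * y$j * Q j i) = (\<Sum>i\<in>UNIV. y$i * ((\<Sum>j\<in>UNIV. y$j *\<^sub>R e j) \<bullet> f (e i)))"
      unfolding Q_def by (simp add: inner_sum_left sum_distrib_left mult.assoc)
    also have "\<dots> = (\<Sum>i\<in>UNIV. y$i * (y \<bullet> f (e i)))"
      using basis_expansion[of y] unfolding e_def by (simp add: scalar_mult_eq_scaleR)
    also have "\<dots> = y \<bullet> f y" using linear_inner_expand[OF lin, of y] unfolding e_def by simp
    finally show ?thesis .
  qed
  then have off': "(\<Sum>i\<in>UNIV. \<Sum>j\<in>UNIV. y$i * y$j * Q i j) = y \<bullet> f y"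
    by (subst sum.swap) (simp add: mult.commute)
  have "(\<Sum>i\<in>UNIV. \<Sum>j\<in>UNIV. (y$i *\<^sub>R e j - y$j *\<^sub>R e i) \<bullet> f (y$i *\<^sub>R e j - y$j *\<^sub>R e i))
      = (\<Sum>i\<in>UNIV. \<Sum>j\<in>UNIV. y$i * y$i * Q j j) - (\<Sum>i\<in>UNIV. \<Sum>j\<in>UNIV. y$i * y$j * Q j i)
      - (\<Sum>i\<in>UNIV. \<Sum>j\<in>UNIV. y$i * y$j * Q i j) + (\<Sum>i\<in>UNIV. \<Sum>j\<in>UNIV. y$j * y$j * Q i i)"
    unfolding quad by (simp add: sum.distrib sum_subtractf)
  also have "\<dots> = 2 * ((y \<bullet> y) * (\<Sum>i\<in>UNIV. Q i i) - y \<bullet> f y)"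
    unfolding diag diag' off off' by simp
  finally have sum_eq: "(\<Sum>i\<in>UNIV. \<Sum>j\<in>UNIV. (y$i *\<^sub>R e j - y$j *\<^sub>R e i) \<bullet> f (y$i *\<^sub>R e j - y$j *\<^sub>R e i))
      = 2 * ((y \<bullet> y) * (\<Sum>i\<in>UNIV. Q i i) - y \<bullet> f y)" .
  have "(\<Sum>i\<in>UNIV. \<Sum>j\<in>UNIV. (y$i *\<^sub>R e j - y$j *\<^sub>R e i) \<bullet> f (y$i *\<^sub>R e j - y$j *\<^sub>R e i)) \<le> 0"
    using nsd by (intro sum_nonpos) auto
  then have "2 * ((y \<bullet> y) * (\<Sum>i\<in>UNIV. Q i i) - y \<bullet> f y) \<le> 0" unfolding sum_eq .
  then show ?thesis unfolding Q_def e_def by simp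
qed

lemma nsd_trace_nonpos_rank_one:
  fixes y :: "real^'n"
  assumes g: "\<gamma> > 0" and k: "k \<ge> 0" "k * (y \<bullet> y) \<le> 1"
  shows "nsd_trace_nonpos ((1/\<gamma>) *\<^sub>R (mat 1 - k *\<^sub>R outer y y))"
  unfolding nsd_trace_nonpos_def
proof (intro allI impI)
  fix f :: "real^'n \<Rightarrow> real^'n" assume lin: "linear f" and nsd: "\<forall>e. e \<bullet> f e \<le> 0"
  define T where "T = (\<Sum>i\<in>UNIV. axis i 1 \<bullet> f (axis i 1))"
  have T0: "T \<le> 0" unfolding T_def using nsd by (intro sum_nonpos) auto
  have "(\<Sum>i\<in>UNIV. (((1/\<gamma>) *\<^sub>R (mat 1 - k *\<^sub>R outer y y)) *v f (axis i 1)) $ i)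
     = (1/\<gamma>) * (\<Sum>i\<in>UNIV. f (axis i 1) $ i - k * (y$i * (y \<bullet> f (axis i 1))))"
    by (simp add: scaleR_matrix_vector_assoc[symmetric] matrix_vector_mult_diff_rdistrib outer_mult_vec
        sum_distrib_left algebra_simps)
  also have "\<dots> = (1/\<gamma>) * ((1 - k * (y \<bullet> y)) * T + k * ((y \<bullet> y) * T - y \<bullet> f y))"
    unfolding T_def linear_inner_expand[OF lin, of y]
    by (simp add: sum_subtractf sum_distrib_left inner_axis' algebra_simps)
  also have "\<dots> \<le> 0"
    using T0 nsd_trace_rank_one_bound[OF lin nsd, of y] k g unfolding T_def[symmetric]
    by (intro mult_nonneg_nonpos add_nonpos_nonpos mult_nonneg_nonpos) auto
  finally show "(\<Sum>i\<in>UNIV. (((1/\<gamma>) *\<^sub>R (mat 1 - k *\<^sub>R outer y y)) *v f (axis i 1)) $ i) \<le> 0" .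
qed

lemma gpoly_exponent_pos:
  assumes adm: "gpoly_admissible a al N" and j: "j \<in> {1..N}"
  shows "al j > 0"
proof -
  have jN: "j \<le> N" using j by simp
  have "1 \<le> j" using j by simp
  then have "al 1 \<le> al j"
  proof (induction j rule: dec_induct)
    case (step m)
    then have "al m < al (Suc m)" using adm jN unfolding gpoly_admissible_def by auto
    with step.IH show ?case by simp
  qed simp
  moreover have "al 1 > 0" using adm j unfolding gpoly_admissible_def by auto
  ultimately show ?thesis by simp
qed

lemma gpoly_ge_const: "gpoly_admissible a al N \<Longrightarrow> s \<ge> 0 \<Longrightarrow> gpoly a al N s \<ge> a 0"
  unfolding gpoly_def gpoly_admissible_def by (auto intro!: sum_nonneg)

lemma gpoly_pos: "gpoly_admissible a al N \<Longrightarrow> s \<ge> 0 \<Longrightarrow> gpoly a al N s > 0"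
  using gpoly_ge_const[of a al N s] unfolding gpoly_admissible_def by linarith

lemma gpoly_mono:
  assumes adm: "gpoly_admissible a al N" and s: "0 \<le> s" "s \<le> s'"
  shows "gpoly a al N s \<le> gpoly a al N s'"
  unfolding gpoly_def
proof (intro add_left_mono sum_mono)
  fix j assume j: "j \<in> {1..N}"
  have "s powr al j \<le> s' powr al j" using gpoly_exponent_pos[OF adm j] s by (intro powr_mono2) auto
  then show "a j * s powr al j \<le> a j * s' powr al j"
    using adm j unfolding gpoly_admissible_def by (intro mult_left_mono) auto
qed

lemma gpoly_deriv_nonneg:
  assumes adm: "gpoly_admissible a al N"
  shows "gpoly_deriv a al N s \<ge> 0"
  unfolding gpoly_deriv_def
proof (rule sum_nonneg)
  fix j assume j: "j \<in> {1..N}"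
  then have "a j \<ge> 0" "al j \<ge> 0" using adm gpoly_exponent_pos[OF adm j] unfolding gpoly_admissible_def by auto
  then show "a j * al j * s powr (al j - 1) \<ge> 0" by simp
qed

text \<open>s g'(s) is again a combination of powers, hence nondecreasing.\<close>
lemma gpoly_deriv_times:
  assumes "s > 0"
  shows "gpoly_deriv a al N s * s = (\<Sum>j=1..N. a j * al j * s powr al j)"
  unfolding gpoly_deriv_def sum_distrib_right
  using assms by (intro sum.cong refl) (simp add: powr_diff mult.assoc)

lemma gpoly_deriv_times_mono:
  assumes adm: "gpoly_admissible a al N" and s: "0 < s" "s \<le> s'"
  shows "gpoly_deriv a al N s * s \<le> gpoly_deriv a al N s' * s'"
proof -
  have "(\<Sum>j=1..N. a j * al j * s powr al j) \<le> (\<Sum>j=1..N. a j * al j * s' powr al j)"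
  proof (rule sum_mono)
    fix j assume j: "j \<in> {1..N}"
    have "s powr al j \<le> s' powr al j" using gpoly_exponent_pos[OF adm j] s by (intro powr_mono2) auto
    moreover have "a j * al j \<ge> 0"
      using adm j gpoly_exponent_pos[OF adm j] unfolding gpoly_admissible_def by auto
    ultimately show "a j * al j * s powr al j \<le> a j * al j * s' powr al j" by (intro mult_left_mono)
  qed
  then show ?thesis using gpoly_deriv_times[of s] gpoly_deriv_times[of s'] s by simp
qed

lemma gpoly_differentiable:
  assumes "s > 0"
  shows "gpoly a al N differentiable (at s)"
proof -
  have "((\<lambda>s. a 0 + (\<Sum>j=1..N. a j * s powr al j)) has_real_derivative
     (0 + (\<Sum>j=1..N. a j * (al j * s powr (al j - 1))))) (at s)"
    using assms by (intro DERIV_add DERIV_const DERIV_sum DERIV_cmult has_real_derivative_powr)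
  then show ?thesis unfolding gpoly_def[abs_def] real_differentiable_def by blast
qed

lemma gpoly_deriv_differentiable:
  assumes "s > 0"
  shows "gpoly_deriv a al N differentiable (at s)"
proof -
  have "((\<lambda>s. (\<Sum>j=1..N. a j * al j * s powr (al j - 1))) has_real_derivative
     ((\<Sum>j=1..N. a j * al j * ((al j - 1) * s powr (al j - 1 - 1))))) (at s)"
    using assms by (intro DERIV_sum DERIV_cmult has_real_derivative_powr)
  then show ?thesis unfolding gpoly_deriv_def[abs_def] real_differentiable_def by blast
qed

lemma pos_of_increasing_from_zero:
  fixes f :: "real \<Rightarrow> real"
  assumes c: "continuous_on {0..1} f" and d: "\<forall>s\<in>{0<..<1}. f differentiable (at s)"
    and inc: "\<forall>s\<in>{0<..<1}. deriv f s > 0" and f0: "f 0 = 0" and s: "s \<in> {0<..<1}"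
  shows "f s > 0"
proof -
  have "f 0 < f s"
  proof (rule DERIV_pos_imp_increasing_open[of 0 s f])
    fix x assume "0 < x" "x < s"
    then show "\<exists>y. DERIV f x :> y \<and> y > 0"
      using d inc s by (metis DERIV_deriv_iff_real_differentiable greaterThanLessThan_iff order.strict_trans)
  qed (use s in \<open>auto intro: continuous_on_subset[OF c]\<close>)
  then show ?thesis using f0 by simp
qed

lemma pos_of_decreasing_to_zero:
  fixes f :: "real \<Rightarrow> real"
  assumes c: "continuous_on {0..1} f" and d: "\<forall>s\<in>{0<..<1}. f differentiable (at s)"
    and dec: "\<forall>s\<in>{0<..<1}. deriv f s < 0" and f1: "f 1 = 0" and s: "s \<in> {0<..<1}"
  shows "f s > 0"
proof -
  have "f 1 < f s"
  proof (rule DERIV_neg_imp_decreasing_open[of s 1 f])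
    fix x assume "s < x" "x < 1"
    then show "\<exists>y. DERIV f x :> y \<and> y < 0"
      using d dec s by (metis DERIV_deriv_iff_real_differentiable greaterThanLessThan_iff order.strict_trans)
  qed (use s in \<open>auto intro: continuous_on_subset[OF c]\<close>)
  then show ?thesis using f1 by simp
qed

lemma Ffun_regular:
  fixes f pc' :: "real \<Rightarrow> real"
  assumes pcd: "\<forall>s\<in>{0<..<1}. pc' differentiable (at s)" and pcdc: "continuous_on {0<..<1} (deriv pc')"
    and pcpos: "\<forall>s\<in>{0<..<1}. pc' s > 0"
    and fd: "\<forall>s\<in>{0<..<1}. f differentiable (at s)" and fdc: "continuous_on {0<..<1} (deriv f)"
    and fpos: "\<forall>s\<in>{0<..<1}. f s > 0"
  shows "\<forall>s\<in>{0<..<1}. Ffun pc' f s > 0"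
    and "\<forall>s\<in>{0<..<1}. Ffun pc' f differentiable (at s)"
    and "continuous_on {0<..<1} (deriv (Ffun pc' f))"
proof -
  define D where "D s = - ((deriv pc' s * f s + pc' s * deriv f s) * inverse ((pc' s * f s)\<^sup>2))" for s
  have FD: "(Ffun pc' f has_real_derivative D s) (at s)" if s: "s \<in> {0<..<1}" for s
  proof -
    have "(pc' has_real_derivative deriv pc' s) (at s)" "(f has_real_derivative deriv f s) (at s)"
      using pcd fd s DERIV_deriv_iff_real_differentiable by blast+
    then have "((\<lambda>s. pc' s * f s) has_real_derivative (deriv pc' s * f s + pc' s * deriv f s)) (at s)"
      by (rule DERIV_cong[OF DERIV_mult]) (simp add: algebra_simps)
    moreover have "pc' s * f s \<noteq> 0" using pcpos fpos s by (simp add: less_imp_neq[symmetric])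
    ultimately have "((\<lambda>s. inverse (pc' s * f s)) has_real_derivative D s) (at s)"
      unfolding D_def by (rule DERIV_cong[OF DERIV_inverse_fun]) (simp_all add: power2_eq_square)
    then show ?thesis unfolding Ffun_def[abs_def] by (simp add: inverse_eq_divide)
  qed
  show "\<forall>s\<in>{0<..<1}. Ffun pc' f s > 0" using pcpos fpos by (simp add: Ffun_def)
  show "\<forall>s\<in>{0<..<1}. Ffun pc' f differentiable (at s)"
    using FD real_differentiable_def by blast
  have "continuous_on {0<..<1} D"
  proof -
    have "continuous_on {0<..<1} pc'" "continuous_on {0<..<1} f" using pcd fd
      by (auto intro!: continuous_at_imp_continuous_on differentiable_imp_continuous_within)
    moreover have "\<forall>s\<in>{0<..<1}. (pc' s * f s)\<^sup>2 \<noteq> 0" using pcpos fpos by (simp add: less_imp_neq[symmetric])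
    ultimately show ?thesis unfolding D_def
      by (intro continuous_intros pcdc fdc) auto
  qed
  moreover have "\<forall>s\<in>{0<..<1}. D s = deriv (Ffun pc' f) s" using FD DERIV_imp_deriv by metis
  ultimately show "continuous_on {0<..<1} (deriv (Ffun pc' f))"
    using continuous_on_cong by blast
qed

lemma continuous_on_Icc_Inf_Sup_bounds:
  fixes h :: "real \<Rightarrow> real"
  assumes "continuous_on {a..b} h" "s \<in> {a..b}"
  shows "Inf (h ` {a..b}) \<le> h s" and "h s \<le> Sup (h ` {a..b})"
proof -
  have "bounded (h ` {a..b})" using assms(1) by (intro compact_imp_bounded compact_continuous_image) auto
  then show "Inf (h ` {a..b}) \<le> h s" "h s \<le> Sup (h ` {a..b})"
    using assms(2) by (auto intro!: cInf_lower cSup_upper bounded_imp_bdd_below bounded_imp_bdd_above)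
qed

lemma continuous_on_Icc_Inf_pos:
  fixes h :: "real \<Rightarrow> real"
  assumes "continuous_on {a..b} h" "a \<le> b" "\<forall>s\<in>{a..b}. h s > 0"
  shows "Inf (h ` {a..b}) > 0"
proof -
  obtain m where m: "m \<in> {a..b}" "\<forall>s\<in>{a..b}. h m \<le> h s"
    using continuous_attains_inf[OF compact_Icc _ assms(1)] assms(2) by auto
  then have "Inf (h ` {a..b}) = h m" by (intro cInf_eq_minimum) auto
  then show ?thesis using m assms(3) by simp
qed

text \<open>Magnitude of the reference velocity u* = c |x|^(-n) x at radius r in dimension n.\<close>
definition umag :: "nat \<Rightarrow> real \<Rightarrow> real \<Rightarrow> real" where
  "umag n c r = \<bar>c\<bar> * r powr (1 - real n)"

lemma umag_nonneg: "umag n c r \<ge> 0"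
  unfolding umag_def by simp

lemma umag_antimono: "n \<ge> 1 \<Longrightarrow> 0 < r0 \<Longrightarrow> r0 \<le> r \<Longrightarrow> umag n c r \<le> umag n c r0"
  unfolding umag_def by (intro mult_left_mono powr_mono2') auto

lemma umag_differentiable:
  assumes "r > 0"
  shows "umag n c differentiable (at r)"
proof -
  have "((\<lambda>r. \<bar>c\<bar> * r powr (1 - real n)) has_real_derivative (\<bar>c\<bar> * ((1 - real n) * r powr (1 - real n - 1)))) (at r)"
    using assms by (intro DERIV_cmult has_real_derivative_powr)
  then show ?thesis unfolding umag_def[abs_def] real_differentiable_def by blast
qed

lemma norm_ustar:
  fixes y :: "real^'n"
  assumes "y \<noteq> 0"
  shows "norm (ustar c y) = umag CARD('n) c (norm y)"
proof -
  have "norm y powr (1 - real CARD('n)) = norm y / norm y ^ CARD('n)"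
    using assms by (simp add: powr_diff powr_realpow)
  then show ?thesis unfolding ustar_def umag_def using assms by (simp add: abs_mult)
qed

lemma outer_scaleR: "outer (a *\<^sub>R y) (a *\<^sub>R y) = (a * a) *\<^sub>R outer y (y::real^'n)"
  by (simp add: vec_eq_iff outer_def algebra_simps)

lemma Gjac_ustar:
  fixes y :: "real^'n" and c :: real
  assumes y: "y \<noteq> 0"
  defines "\<rho> \<equiv> umag CARD('n) c (norm y)"
  shows "Gjac g g' (ustar c y) = g \<rho> *\<^sub>R mat 1 + (g' \<rho> * \<rho> / (norm y)\<^sup>2) *\<^sub>R outer y y"
proof (cases "c = 0")
  case True then show ?thesis by (simp add: Gjac_def ustar_def \<rho>_def umag_def)
next
  case False
  define k where "k = c / norm y ^ CARD('n)"
  have ny: "norm y > 0" using y by simp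
  have rp: "\<rho> > 0" unfolding \<rho>_def umag_def using False ny by simp
  have nu: "norm (ustar c y) = \<rho>" unfolding \<rho>_def using norm_ustar[OF y] .
  have "\<rho> * \<rho> = k * k * (norm y)\<^sup>2"
  proof -
    have "norm y powr (1 - real CARD('n)) = norm y / norm y ^ CARD('n)"
      using ny by (simp add: powr_diff powr_realpow)
    then show ?thesis unfolding \<rho>_def umag_def k_def
      using ny by (simp add: field_simps power2_eq_square abs_mult_self_eq)
  qed
  then have "(g' \<rho> / \<rho>) * (k * k) = g' \<rho> * \<rho> / (norm y)\<^sup>2"
    using rp ny by (simp add: field_simps power2_eq_square)
  moreover have "Gjac g g' (ustar c y) = g \<rho> *\<^sub>R mat 1 + ((g' \<rho> / \<rho>) * (k * k)) *\<^sub>R outer y y"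
    using nu rp outer_scaleR[of k y] unfolding Gjac_def ustar_def k_def by auto
  ultimately show ?thesis by simp
qed

lemma gpoly_umag_bounds:
  assumes adm: "gpoly_admissible a al N" and n: "n \<ge> 1" and r: "0 < r0" "r0 \<le> r"
  shows "gpoly a al N 0 \<le> gpoly a al N (umag n c r)"
    and "gpoly a al N (umag n c r) \<le> gpoly a al N (umag n c r0)"
  using gpoly_mono[OF adm order_refl umag_nonneg] gpoly_mono[OF adm umag_nonneg umag_antimono[OF n r]]
  by auto

lemma gpoly_deriv_umag_bounds:
  assumes adm: "gpoly_admissible a al N" and n: "n \<ge> 1" and r: "0 < r0" "r0 \<le> r"
  shows "0 \<le> gpoly_deriv a al N (umag n c r) * umag n c r"
    and "gpoly_deriv a al N (umag n c r) * umag n c r \<le> gpoly_deriv a al N (umag n c r0) * umag n c r0"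
proof -
  show "0 \<le> gpoly_deriv a al N (umag n c r) * umag n c r"
    using gpoly_deriv_nonneg[OF adm] umag_nonneg by simp
  show "gpoly_deriv a al N (umag n c r) * umag n c r \<le> gpoly_deriv a al N (umag n c r0) * umag n c r0"
  proof (cases "c = 0")
    case False
    then have "umag n c r > 0" using r unfolding umag_def by simp
    then show ?thesis using gpoly_deriv_times_mono[OF adm _ umag_antimono[OF n r]] by blast
  qed (simp add: umag_def)
qed

lemma gpoly_flux_umag_bound:
  assumes adm: "gpoly_admissible a al N" and n: "n \<ge> 1" and r: "0 < r0" "r0 \<le> r"
  shows "gpoly a al N (umag n c r) * umag n c r \<le> gpoly a al N (umag n c r0) * umag n c r0"
  using gpoly_umag_bounds(2)[OF adm n r] umag_antimono[OF n r] umag_nonneg gpoly_pos[OF adm umag_nonneg]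
  by (intro mult_mono) (auto simp: less_imp_le)

lemma differentiable_comp_umag:
  assumes h: "\<And>s. s > 0 \<Longrightarrow> h differentiable (at s)" and r: "r > 0"
  shows "(\<lambda>r. h (umag n c r)) differentiable (at r)"
proof (cases "c = 0")
  case False
  then have "umag n c r > 0" using r unfolding umag_def by simp
  then show ?thesis
    using differentiable_chain_at[OF umag_differentiable[OF r] h] by (simp add: o_def)
qed (simp add: umag_def)

lemma gpoly_umag_differentiable:
  assumes "r > 0"
  shows "(\<lambda>r. gpoly a al N (umag n c r)) differentiable (at r)"
    and "(\<lambda>r. gpoly_deriv a al N (umag n c r)) differentiable (at r)"
  using assms gpoly_differentiable gpoly_deriv_differentiable
  by (auto intro!: differentiable_comp_umag)

definition heat_kernel :: "real \<Rightarrow> real \<Rightarrow> real \<Rightarrow> real" where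
  "heat_kernel s \<xi> \<tau> = \<tau> powr (- s) * exp (- \<xi> / \<tau>)"

lemma heat_kernel_pos: "\<tau> > 0 \<Longrightarrow> heat_kernel s \<xi> \<tau> > 0"
  unfolding heat_kernel_def by simp

lemma heat_kernel_deriv_xi:
  assumes "\<tau> > 0"
  shows "((\<lambda>\<xi>. heat_kernel s \<xi> \<tau>) has_real_derivative (- heat_kernel s \<xi> \<tau> / \<tau>)) (at \<xi>)"
proof -
  have "((\<lambda>\<xi>. \<tau> powr (- s) * exp (- \<xi> / \<tau>)) has_real_derivative (\<tau> powr (- s) * (exp (- \<xi> / \<tau>) * (- 1 / \<tau>)))) (at \<xi>)"
    using assms by (auto intro!: derivative_eq_intros)
  then show ?thesis unfolding heat_kernel_def by (simp add: algebra_simps)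
qed

lemma heat_kernel_deriv_tau:
  assumes "\<tau> > 0"
  shows "((\<lambda>\<tau>. heat_kernel s \<xi> \<tau>) has_real_derivative (heat_kernel s \<xi> \<tau> * (- s / \<tau> + \<xi> / \<tau>\<^sup>2))) (at \<tau>)"
proof -
  have "((\<lambda>\<tau>. \<tau> powr (- s) * exp (- \<xi> / \<tau>)) has_real_derivative
     ((- s) * \<tau> powr (- s - 1) * exp (- \<xi> / \<tau>) + \<tau> powr (- s) * (exp (- \<xi> / \<tau>) * (\<xi> / \<tau>\<^sup>2)))) (at \<tau>)"
    using assms by (auto intro!: derivative_eq_intros simp: power2_eq_square field_simps)
  moreover have "\<tau> powr (- s - 1) = \<tau> powr (- s) / \<tau>" using assms by (simp add: powr_diff)
  ultimately show ?thesis unfolding heat_kernel_def by (simp add: algebra_simps)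
qed

lemma heat_kernel_antimono: "\<tau> > 0 \<Longrightarrow> \<xi> \<le> \<xi>' \<Longrightarrow> heat_kernel s \<xi>' \<tau> \<le> heat_kernel s \<xi> \<tau>"
  unfolding heat_kernel_def by (intro mult_left_mono) (auto simp: divide_right_mono)

lemma powr_exp_bound:
  fixes u s :: real
  assumes u: "u > 0" and s: "s > 0"
  shows "u powr s * exp (- u) \<le> s powr s * exp (- s)"
proof -
  have "ln (u / s) \<le> u / s - 1" using u s by (intro ln_le_minus_one) simp
  then have "s * ln u - u \<le> s * ln s - s" using u s by (simp add: ln_div field_simps)
  then have "exp (s * ln u - u) \<le> exp (s * ln s - s)" by simp
  then show ?thesis using u s by (simp add: exp_diff powr_def exp_minus field_simps)
qed

text \<open>Uniform upper bound of the profile for fixed xi > 0 (maximise over tau).\<close>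
lemma heat_kernel_le:
  assumes s: "s > 0" and x: "\<xi> > 0" and t: "\<tau> > 0"
  shows "heat_kernel s \<xi> \<tau> \<le> (s / (exp 1 * \<xi>)) powr s"
proof -
  define u where "u = \<xi> / \<tau>"
  have up: "u > 0" unfolding u_def using x t by simp
  have "heat_kernel s \<xi> \<tau> = \<xi> powr (- s) * (u powr s * exp (- u))"
    unfolding heat_kernel_def u_def using x t by (simp add: powr_divide powr_minus field_simps)
  also have "\<dots> \<le> \<xi> powr (- s) * (s powr s * exp (- s))"
    using powr_exp_bound[OF up s] by (intro mult_left_mono) auto
  also have "\<dots> = (s / (exp 1 * \<xi>)) powr s"
    using x s by (simp add: powr_divide powr_mult powr_minus powr_def[of "exp 1"] exp_minus field_simps)
  finally show ?thesis .
qed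

lemma heat_kernel_ge:
  assumes t: "\<tau> > 0" and x: "\<xi> \<le> s * \<tau>"
  shows "\<tau> powr (- s) * exp (- s) \<le> heat_kernel s \<xi> \<tau>"
proof -
  have "\<xi> / \<tau> \<le> s" using x t by (simp add: divide_le_eq mult.commute)
  then show ?thesis unfolding heat_kernel_def by (intro mult_left_mono) auto
qed

text \<open>The profile vanishes as tau -> 0+ for xi > 0; this removes the regularisation at t = 0.\<close>
lemma heat_kernel_vanishes:
  assumes "\<xi> > 0" "k > 0"
  shows "((\<lambda>\<epsilon>. heat_kernel s \<xi> (\<epsilon> / k)) \<longlongrightarrow> 0) (at_right 0)"
  unfolding heat_kernel_def using assms by real_asymp

lemma Sup_insert_zero_bounds:
  fixes f :: "'a::heine_borel \<Rightarrow> real"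
  assumes U: "bounded U" and f: "continuous_on (closure U) f"
  shows "0 \<le> Sup (insert 0 (f ` U))" and "\<forall>x\<in>closure U. f x \<le> Sup (insert 0 (f ` U))"
proof -
  have "bounded (f ` closure U)"
    using compact_continuous_image[OF f] U by (intro compact_imp_bounded) (simp add: compact_closure)
  moreover have "f ` U \<subseteq> f ` closure U" using closure_subset by auto
  ultimately have "bounded (f ` U)" by (rule bounded_subset)
  then have bdd: "bdd_above (insert 0 (f ` U))" by (simp add: bounded_imp_bdd_above)
  then show "0 \<le> Sup (insert 0 (f ` U))" by (intro cSup_upper) auto
  have "\<forall>x\<in>U. f x \<le> Sup (insert 0 (f ` U))" using bdd by (auto intro!: cSup_upper)
  then show "\<forall>x\<in>closure U. f x \<le> Sup (insert 0 (f ` U))"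
    using continuous_le_on_closure[OF f] by blast
qed

lemma Sup_insert_zero_le:
  assumes "\<forall>x\<in>U. f x \<le> c" and "(0::real) \<le> c"
  shows "Sup (insert 0 (f ` U)) \<le> c"
  using assms by (intro cSup_least) auto

lemma boundary_inequality_closure:
  fixes w :: "'a::topological_space \<Rightarrow> real \<Rightarrow> real"
  assumes T: "T > 0" and cont: "continuous_on (K \<times> {0..T}) (\<lambda>(x,t). w x t)" and x: "x \<in> K"
    and le: "\<forall>t\<in>{0<..<T}. w x t \<le> 0" and t: "t \<in> {0<..T}"
  shows "w x t \<le> 0"
proof -
  have "continuous_on {0..T} (\<lambda>t. (\<lambda>(x,t). w x t) (x, t))"
    using x by (intro continuous_on_compose2[OF cont]) (auto intro!: continuous_intros)
  then have "continuous_on (closure {0<..<T}) (\<lambda>t. w x t)" using T by simp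
  moreover have "t \<in> closure {0<..<T}" using t T by simp
  ultimately show ?thesis using continuous_le_on_closure le by blast
qed


text \<open>The hypotheses of the theorem (the bounded-domain setup).  The dimension n = CARD('n)
  is an explicit parameter so that it can appear in local abbreviations.\<close>
locale bounded_setup =
  fixes a1 al1 a2 al2 :: "nat \<Rightarrow> real" and N1 N2 :: nat
    and f1 f2 pc' :: "real \<Rightarrow> real"
    and r0 c1 c2 R sl sh :: real
    and Shat :: "real \<Rightarrow> real"
    and U :: "(real^'n) set" and n :: nat
    and d0 d1 d2 d3 d4 mu1 mu2 mu3 C0 C1 C2 kappa0 sR q eta0 :: real
  assumes n_card: "n = CARD('n)" and dim: "n \<ge> 2"
    and adm1: "gpoly_admissible a1 al1 N1" and adm2: "gpoly_admissible a2 al2 N2"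
    and f1c: "continuous_on {0..1} f1" and f2c: "continuous_on {0..1} f2"
    and f1d: "\<forall>s\<in>{0<..<1}. f1 differentiable (at s)" and f1dc: "continuous_on {0<..<1} (deriv f1)"
    and f2d: "\<forall>s\<in>{0<..<1}. f2 differentiable (at s)" and f2dc: "continuous_on {0<..<1} (deriv f2)"
    and f10: "f1 0 = 0" and f21: "f2 1 = 0"
    and f1mono: "\<forall>s\<in>{0<..<1}. deriv f1 s > 0" and f2mono: "\<forall>s\<in>{0<..<1}. deriv f2 s < 0"
    and pcd: "\<forall>s\<in>{0<..<1}. pc' differentiable (at s)" and pcdc: "continuous_on {0<..<1} (deriv pc')"
    and pcpos: "\<forall>s\<in>{0<..<1}. pc' s > 0"
    and r0pos: "r0 > 0" and R: "r0 < R"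
    and Sode: "\<forall>r\<in>{r0..R}. (Shat has_real_derivative
        (Gs (gpoly a2 al2 N2) (c2 * r powr (1 - real CARD('n))) * Ffun pc' f2 (Shat r)
         - Gs (gpoly a1 al1 N1) (c1 * r powr (1 - real CARD('n))) * Ffun pc' f1 (Shat r)))
        (at r within {r0..R})"
    and Sbounds: "0 < sl" "sh < 1" "\<forall>r\<in>{r0..R}. sl \<le> Shat r \<and> Shat r \<le> sh"
    and Uopen: "open U" and Ubdd: "bounded U" and Usub: "U \<subseteq> ball 0 R - cball 0 r0"
    and d0: "d0 = min (gpoly a1 al1 N1 0) (gpoly a2 al2 N2 0)"
    and d1: "d1 = gpoly a1 al1 N1 (\<bar>c1\<bar> * r0 powr (1 - real CARD('n)))
                + gpoly a2 al2 N2 (\<bar>c2\<bar> * r0 powr (1 - real CARD('n)))"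
    and d2: "d2 = gpoly a1 al1 N1 (\<bar>c1\<bar> * r0 powr (1 - real CARD('n))) * (\<bar>c1\<bar> * r0 powr (1 - real CARD('n)))
                + gpoly a2 al2 N2 (\<bar>c2\<bar> * r0 powr (1 - real CARD('n))) * (\<bar>c2\<bar> * r0 powr (1 - real CARD('n)))"
    and d3: "d3 = (if c1 = 0 then 0 else gpoly_deriv a1 al1 N1 (\<bar>c1\<bar> * r0 powr (1 - real CARD('n))) * (\<bar>c1\<bar> * r0 powr (1 - real CARD('n))))
                + (if c2 = 0 then 0 else gpoly_deriv a2 al2 N2 (\<bar>c2\<bar> * r0 powr (1 - real CARD('n))) * (\<bar>c2\<bar> * r0 powr (1 - real CARD('n))))"
    and d4: "d4 = d1 + d3"
    and mu1: "mu1 = Sup (Ffun pc' f1 ` {sl..sh}) + Sup (Ffun pc' f2 ` {sl..sh})"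
    and mu2: "mu2 = Inf (Ffun pc' f1 ` {sl..sh}) + Inf (Ffun pc' f2 ` {sl..sh})"
    and mu3: "mu3 = Sup ((\<lambda>s. \<bar>deriv (Ffun pc' f1) s\<bar>) ` {sl..sh}) + Sup ((\<lambda>s. \<bar>deriv (Ffun pc' f2) s\<bar>) ` {sl..sh})"
    and C0: "C0 = d4 * mu1" and C1: "C1 = d0 * mu2" and C2: "C2 = d2 * mu3"
    and kappa0: "kappa0 = C0 / (2 * C1)"
    and sR: "sR = kappa0 * (real CARD('n) + C2 * R)"
    and q: "q = kappa0 * C0 / (2 * sR)"
    and eta0: "eta0 = (r0 / R) powr (2 * sR)"
begin

abbreviation "F1 \<equiv> Ffun pc' f1"
abbreviation "F2 \<equiv> Ffun pc' f2"
abbreviation "g1 \<equiv> gpoly a1 al1 N1"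
abbreviation "g2 \<equiv> gpoly a2 al2 N2"
abbreviation "g1' \<equiv> gpoly_deriv a1 al1 N1"
abbreviation "g2' \<equiv> gpoly_deriv a2 al2 N2"
abbreviation "rho1 \<equiv> umag n c1"
abbreviation "rho2 \<equiv> umag n c2"

lemma dim1: "n \<ge> 1" using dim by simp

lemma S_range: "r \<in> {r0..R} \<Longrightarrow> Shat r \<in> {sl..sh}" "r \<in> {r0..R} \<Longrightarrow> Shat r \<in> {0<..<1}"
  using Sbounds by fastforce+

lemma sl_sh: "sl \<le> sh" using Sbounds(3) R by fastforce

lemma f_pos: "\<forall>s\<in>{0<..<1}. f1 s > 0" "\<forall>s\<in>{0<..<1}. f2 s > 0"
  using pos_of_increasing_from_zero[OF f1c f1d f1mono f10]
    pos_of_decreasing_to_zero[OF f2c f2d f2mono f21] by blast+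

lemmas F1_regular = Ffun_regular[OF pcd pcdc pcpos f1d f1dc f_pos(1)]
lemmas F2_regular = Ffun_regular[OF pcd pcdc pcpos f2d f2dc f_pos(2)]

lemma F_bounds:
  fixes f :: "real \<Rightarrow> real"
  assumes pos: "\<forall>s\<in>{0<..<1}. Ffun pc' f s > 0"
    and d: "\<forall>s\<in>{0<..<1}. Ffun pc' f differentiable (at s)"
    and dc: "continuous_on {0<..<1} (deriv (Ffun pc' f))"
    and r: "r \<in> {r0..R}"
  shows "0 < Inf (Ffun pc' f ` {sl..sh})" "Inf (Ffun pc' f ` {sl..sh}) \<le> Ffun pc' f (Shat r)"
    "Ffun pc' f (Shat r) \<le> Sup (Ffun pc' f ` {sl..sh})"
    "\<bar>deriv (Ffun pc' f) (Shat r)\<bar> \<le> Sup ((\<lambda>s. \<bar>deriv (Ffun pc' f) s\<bar>) ` {sl..sh})"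
proof -
  have sub: "{sl..sh} \<subseteq> {0<..<1}" using Sbounds by auto
  have cF: "continuous_on {sl..sh} (Ffun pc' f)"
    using d sub by (intro continuous_at_imp_continuous_on) (auto intro: differentiable_imp_continuous_within)
  have cdF: "continuous_on {sl..sh} (\<lambda>s. \<bar>deriv (Ffun pc' f) s\<bar>)"
    using continuous_on_subset[OF dc sub] by (intro continuous_intros)
  show "0 < Inf (Ffun pc' f ` {sl..sh})" using continuous_on_Icc_Inf_pos[OF cF sl_sh] pos sub by blast
  show "Inf (Ffun pc' f ` {sl..sh}) \<le> Ffun pc' f (Shat r)" "Ffun pc' f (Shat r) \<le> Sup (Ffun pc' f ` {sl..sh})"
    using continuous_on_Icc_Inf_Sup_bounds[OF cF S_range(1)[OF r]] by blast+
  show "\<bar>deriv (Ffun pc' f) (Shat r)\<bar> \<le> Sup ((\<lambda>s. \<bar>deriv (Ffun pc' f) s\<bar>) ` {sl..sh})"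
    using continuous_on_Icc_Inf_Sup_bounds(2)[OF cdF S_range(1)[OF r]] .
qed

lemmas F1_bounds = F_bounds[OF F1_regular]
lemmas F2_bounds = F_bounds[OF F2_regular]

lemma F_pos: "r \<in> {r0..R} \<Longrightarrow> F1 (Shat r) > 0" "r \<in> {r0..R} \<Longrightarrow> F2 (Shat r) > 0"
  using F1_bounds(1,2) F2_bounds(1,2) by fastforce+

text \<open>Radial coefficients of B = F_1 G_1'(u_1*) + F_2 G_2'(u_2*) = gam I + (eps/|x|^2) x x^T.\<close>
definition gam :: "real \<Rightarrow> real" where
  "gam r = F1 (Shat r) * g1 (rho1 r) + F2 (Shat r) * g2 (rho2 r)"

definition eps :: "real \<Rightarrow> real" where
  "eps r = F1 (Shat r) * (g1' (rho1 r) * rho1 r) + F2 (Shat r) * (g2' (rho2 r) * rho2 r)"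

text \<open>beta is the eigenvalue of B in the radial direction.\<close>
definition beta :: "real \<Rightarrow> real" where
  "beta r = gam r + eps r"

text \<open>gam >= C1: since g_i >= g_i(0) >= d0 and F_i >= Inf F_i.\<close>
lemma d0_pos: "d0 > 0" unfolding d0 using gpoly_pos[OF adm1] gpoly_pos[OF adm2] by simp

lemma gam_ge: assumes r: "r \<in> {r0..R}" shows "C1 \<le> gam r"
proof -
  have "g1 0 \<le> g1 (rho1 r)" "g2 0 \<le> g2 (rho2 r)"
    using gpoly_umag_bounds(1)[OF adm1 dim1 r0pos, where c = c1] gpoly_umag_bounds(1)[OF adm2 dim1 r0pos, where c = c2] r
    by auto
  then have "d0 \<le> g1 (rho1 r)" "d0 \<le> g2 (rho2 r)" unfolding d0 by linarith+
  moreover have "0 < Inf (F1 ` {sl..sh})" "Inf (F1 ` {sl..sh}) \<le> F1 (Shat r)"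
    "0 < Inf (F2 ` {sl..sh})" "Inf (F2 ` {sl..sh}) \<le> F2 (Shat r)"
    using F1_bounds(1,2)[OF r] F2_bounds(1,2)[OF r] by auto
  ultimately have "Inf (F1 ` {sl..sh}) * d0 \<le> F1 (Shat r) * g1 (rho1 r)"
    "Inf (F2 ` {sl..sh}) * d0 \<le> F2 (Shat r) * g2 (rho2 r)"
    using d0_pos by (intro mult_mono; simp)+
  then show ?thesis unfolding gam_def C1 mu2 by (simp add: algebra_simps)
qed

lemma eps_nonneg: assumes r: "r \<in> {r0..R}" shows "eps r \<ge> 0"
proof -
  have "0 \<le> g1' (rho1 r) * rho1 r" "0 \<le> g2' (rho2 r) * rho2 r"
    using gpoly_deriv_umag_bounds(1)[OF adm1 dim1 r0pos] gpoly_deriv_umag_bounds(1)[OF adm2 dim1 r0pos] r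
    by auto
  then show ?thesis unfolding eps_def using F_pos[OF r] by (simp add: less_imp_le)
qed

lemma beta_ge: "r \<in> {r0..R} \<Longrightarrow> C1 \<le> beta r"
  unfolding beta_def using gam_ge eps_nonneg by fastforce

text \<open>beta <= C0: all coefficients are maximal at r0 and F_i <= Sup F_i.\<close>
lemma beta_le: assumes r: "r \<in> {r0..R}" shows "beta r \<le> C0"
proof -
  define X1 where "X1 = g1 (rho1 r0) + g1' (rho1 r0) * rho1 r0"
  define X2 where "X2 = g2 (rho2 r0) + g2' (rho2 r0) * rho2 r0"
  have r0r: "0 < r0" "r0 \<le> r" using r r0pos by auto
  have c1: "0 \<le> g1 (rho1 r) + g1' (rho1 r) * rho1 r" "g1 (rho1 r) + g1' (rho1 r) * rho1 r \<le> X1"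
    using gpoly_pos[OF adm1 umag_nonneg, of n c1 r] gpoly_umag_bounds(2)[OF adm1 dim1 r0r, of c1]
      gpoly_deriv_umag_bounds[OF adm1 dim1 r0r, of c1] unfolding X1_def by linarith+
  have c2: "0 \<le> g2 (rho2 r) + g2' (rho2 r) * rho2 r" "g2 (rho2 r) + g2' (rho2 r) * rho2 r \<le> X2"
    using gpoly_pos[OF adm2 umag_nonneg, of n c2 r] gpoly_umag_bounds(2)[OF adm2 dim1 r0r, of c2]
      gpoly_deriv_umag_bounds[OF adm2 dim1 r0r, of c2] unfolding X2_def by linarith+
  have m: "Sup (F1 ` {sl..sh}) \<ge> 0" "Sup (F2 ` {sl..sh}) \<ge> 0"
    using F1_bounds(3)[OF r] F2_bounds(3)[OF r] F_pos[OF r] by linarith+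
  have "beta r = F1 (Shat r) * (g1 (rho1 r) + g1' (rho1 r) * rho1 r) + F2 (Shat r) * (g2 (rho2 r) + g2' (rho2 r) * rho2 r)"
    unfolding beta_def gam_def eps_def by (simp add: algebra_simps)
  also have "\<dots> \<le> Sup (F1 ` {sl..sh}) * X1 + Sup (F2 ` {sl..sh}) * X2"
    using c1 c2 F1_bounds(3)[OF r] F2_bounds(3)[OF r] m F_pos[OF r]
    by (intro add_mono mult_mono) auto
  also have "\<dots> \<le> (Sup (F1 ` {sl..sh}) + Sup (F2 ` {sl..sh})) * (X1 + X2)"
    using c1 c2 m by (simp add: algebra_simps)
  also have "X1 + X2 = d4" unfolding d4 d1 d3 X1_def X2_def umag_def n_card by auto
  finally show ?thesis unfolding C0 mu1 by (simp add: mult.commute)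
qed

lemma C1_pos: "C1 > 0"
  unfolding C1 mu2 using d0_pos F1_bounds(1)[of r0] F2_bounds(1)[of r0] R by simp

lemma beta_pos: "r \<in> {r0..R} \<Longrightarrow> beta r > 0" using beta_ge C1_pos by fastforce
lemma gam_pos: "r \<in> {r0..R} \<Longrightarrow> gam r > 0" using gam_ge C1_pos by fastforce

lemma C0_pos: "C0 > 0" using beta_le[of r0] beta_pos[of r0] R by fastforce

lemma kappa0_pos: "kappa0 > 0" unfolding kappa0 using C0_pos C1_pos by simp

lemma C2_nonneg: "C2 \<ge> 0"
proof -
  have "mu3 \<ge> 0" unfolding mu3 using F1_bounds(4)[of r0] F2_bounds(4)[of r0] R
    by (smt (verit) abs_ge_zero atLeastAtMost_iff)
  moreover have "d2 \<ge> 0" unfolding d2 using gpoly_pos[OF adm1] gpoly_pos[OF adm2]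
    by (simp add: add_nonneg_nonneg mult_nonneg_nonneg less_imp_le)
  ultimately show ?thesis unfolding C2 by simp
qed

lemma sR_pos: "sR > 0" unfolding sR using kappa0_pos C2_nonneg R r0pos
  by (intro mult_pos_pos add_pos_nonneg mult_nonneg_nonneg) auto

lemma q_pos: "q > 0" unfolding q using kappa0_pos C0_pos sR_pos by simp

lemma Shat_differentiable: "r \<in> {r0<..<R} \<Longrightarrow> Shat differentiable (at r)"
  using Sode at_within_interior[of r "{r0..R}"] unfolding real_differentiable_def
  by (metis greaterThanLessThan_iff atLeastAtMost_iff interior_atLeastAtMost_real less_imp_le)

lemma Shat_continuous: "continuous_on {r0..R} Shat"
  using Sode by (intro DERIV_continuous_on) blast

lemma F_Shat_continuous: "continuous_on {r0..R} (\<lambda>r. F1 (Shat r))" "continuous_on {r0..R} (\<lambda>r. F2 (Shat r))"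
proof -
  have "continuous_on {0<..<1} F1" "continuous_on {0<..<1} F2" using F1_regular(2) F2_regular(2)
    by (auto intro!: continuous_at_imp_continuous_on differentiable_imp_continuous_within)
  then show "continuous_on {r0..R} (\<lambda>r. F1 (Shat r))" "continuous_on {r0..R} (\<lambda>r. F2 (Shat r))"
    using S_range(2) by (auto intro!: continuous_on_compose2[OF _ Shat_continuous])
qed

lemma beta_differentiable: assumes r: "r \<in> {r0<..<R}" shows "beta differentiable (at r)"
proof -
  have S: "Shat r \<in> {0<..<1}" using S_range(2) r by auto
  have "F1 differentiable (at (Shat r))" "F2 differentiable (at (Shat r))"
    using F1_regular(2) F2_regular(2) S by blast+
  then have "(F1 \<circ> Shat) differentiable (at r)" "(F2 \<circ> Shat) differentiable (at r)"
    by (auto intro: differentiable_chain_at[OF Shat_differentiable[OF r]])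
  then have "(\<lambda>r. F1 (Shat r)) differentiable (at r)" "(\<lambda>r. F2 (Shat r)) differentiable (at r)"
    by (simp_all add: o_def)
  then show ?thesis unfolding beta_def[abs_def] gam_def[abs_def] eps_def[abs_def]
    using gpoly_umag_differentiable umag_differentiable r r0pos
    by (intro differentiable_add differentiable_mult) auto
qed

lemma radial_coefficients_continuous:
  "continuous_on {r0..R} gam" "continuous_on {r0..R} eps" "continuous_on {r0..R} beta"
proof -
  have "continuous_on {r0..R} (\<lambda>r. gpoly a al N (umag n c r))"
    "continuous_on {r0..R} (\<lambda>r. gpoly_deriv a al N (umag n c r))" "continuous_on {r0..R} (umag n c)"
    for a al N c
    using gpoly_umag_differentiable umag_differentiable r0pos
    by (auto intro!: continuous_at_imp_continuous_on differentiable_imp_continuous_within)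
  then show gam: "continuous_on {r0..R} gam" and eps: "continuous_on {r0..R} eps"
    unfolding gam_def[abs_def] eps_def[abs_def] using F_Shat_continuous by (auto intro!: continuous_intros)
  show "continuous_on {r0..R} beta" unfolding beta_def[abs_def] using gam eps by (intro continuous_intros)
qed

lemma norm_U: "y \<in> U \<Longrightarrow> norm y \<in> {r0<..<R}" using Usub by auto

lemma norm_closure_U: "y \<in> closure U \<Longrightarrow> norm y \<in> {r0..R}"
proof -
  have "U \<subseteq> {y. r0 \<le> norm y \<and> norm y \<le> R}" using norm_U by fastforce
  moreover have "closed {y::real^'n. r0 \<le> norm y \<and> norm y \<le> R}"
    by (intro closed_Collect_conj closed_Collect_le continuous_intros)
  ultimately have "closure U \<subseteq> {y. r0 \<le> norm y \<and> norm y \<le> R}" by (rule closure_minimal)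
  then show "y \<in> closure U \<Longrightarrow> norm y \<in> {r0..R}" by auto
qed

definition Bmat :: "real^'n \<Rightarrow> real^'n^'n" where
  "Bmat y = F1 (Shat (norm y)) *\<^sub>R Gjac g1 g1' (ustar c1 y) + F2 (Shat (norm y)) *\<^sub>R Gjac g2 g2' (ustar c2 y)"

definition Amat :: "real^'n \<Rightarrow> real^'n^'n" where
  "Amat y = matrix_inv (Bmat y)"

definition bvec :: "real^'n \<Rightarrow> real^'n" where
  "bvec y = deriv F2 (Shat (norm y)) *\<^sub>R Gvec g2 (ustar c2 y) - deriv F1 (Shat (norm y)) *\<^sub>R Gvec g1 (ustar c1 y)"

lemma Bmat_eq:
  fixes y :: "real^'n"
  assumes "norm y \<in> {r0..R}"
  shows "Bmat y = gam (norm y) *\<^sub>R mat 1 + (eps (norm y) / (norm y)\<^sup>2) *\<^sub>R outer y y"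
proof -
  have "norm y > 0" using assms r0pos by (simp del: zero_less_norm_iff)
  then have "y \<noteq> 0" by auto
  then show ?thesis
    using Gjac_ustar[OF \<open>y \<noteq> 0\<close>, where c = c1 and g = g1 and g' = g1']
      Gjac_ustar[OF \<open>y \<noteq> 0\<close>, where c = c2 and g = g2 and g' = g2']
    unfolding Bmat_def n_card[symmetric] gam_def eps_def
    by (simp add: algebra_simps scaleR_add_left add_divide_distrib)
qed

text \<open>Hence, by Sherman--Morrison, A = (1/gam)(I - eps/(|x|^2 beta) x x^T).\<close>
lemma Amat_eq:
  fixes y :: "real^'n"
  assumes r: "norm y \<in> {r0..R}"
  shows "Amat y = (1 / gam (norm y)) *\<^sub>R (mat 1 - (eps (norm y) / ((norm y)\<^sup>2 * beta (norm y))) *\<^sub>R outer y y)"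
proof -
  have np: "norm y > 0" using r r0pos by (simp del: zero_less_norm_iff)
  then have y0: "y \<noteq> 0" by auto
  have "(eps (norm y) / (norm y)\<^sup>2) / (gam (norm y) + (eps (norm y) / (norm y)\<^sup>2) * (y \<bullet> y))
      = eps (norm y) / ((norm y)\<^sup>2 * beta (norm y))"
    using np y0 unfolding beta_def by (simp add: power2_norm_eq_inner[symmetric] field_simps)
  moreover have "Amat y = (1 / gam (norm y)) *\<^sub>R (mat 1 - ((eps (norm y) / (norm y)\<^sup>2)
      / (gam (norm y) + (eps (norm y) / (norm y)\<^sup>2) * (y \<bullet> y))) *\<^sub>R outer y y)"
    unfolding Amat_def Bmat_eq[OF r] using gam_pos[OF r] eps_nonneg[OF r]
    by (intro matrix_inv_rank_one_update) auto
  ultimately show ?thesis by simp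
qed

lemma Amat_radial:
  fixes y :: "real^'n"
  assumes r: "norm y \<in> {r0..R}"
  shows "Amat y *v y = (1 / beta (norm y)) *\<^sub>R y"
proof -
  have np: "norm y > 0" using r r0pos by (simp del: zero_less_norm_iff)
  then have y0: "y \<noteq> 0" by auto
  define k where "k = eps (norm y) / ((norm y)\<^sup>2 * beta (norm y))"
  have "Amat y *v y = (1 / gam (norm y)) *\<^sub>R (y - (k * (y \<bullet> y)) *\<^sub>R y)"
    unfolding Amat_eq[OF r] k_def[symmetric]
    by (simp add: scaleR_matrix_vector_assoc[symmetric] matrix_vector_mult_diff_rdistrib outer_mult_vec)
  also have "\<dots> = ((1 - k * (y \<bullet> y)) / gam (norm y)) *\<^sub>R y"
    by (simp add: algebra_simps diff_divide_distrib)
  also have "(1 - k * (y \<bullet> y)) / gam (norm y) = 1 / beta (norm y)"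
  proof -
    have "k * (y \<bullet> y) = eps (norm y) / beta (norm y)"
      using y0 beta_pos[OF r] unfolding k_def power2_norm_eq_inner[symmetric] by (simp add: field_simps)
    moreover have "1 - eps (norm y) / beta (norm y) = gam (norm y) / beta (norm y)"
      using beta_pos[OF r] unfolding beta_def by (simp add: field_simps)
    ultimately show ?thesis using gam_pos[OF r] by simp
  qed
  finally show ?thesis .
qed

lemma Amat_nsd_trace_nonpos:
  fixes y :: "real^'n"
  assumes r: "norm y \<in> {r0..R}"
  shows "nsd_trace_nonpos (Amat y)"
proof -
  have np: "norm y > 0" using r r0pos by (simp del: zero_less_norm_iff)
  then have y0: "y \<noteq> 0" by auto
  have "eps (norm y) / ((norm y)\<^sup>2 * beta (norm y)) * (y \<bullet> y) = eps (norm y) / beta (norm y)"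
    using np y0 beta_pos[OF r] unfolding power2_norm_eq_inner[symmetric] by (simp add: field_simps)
  also have "\<dots> \<le> 1" using beta_pos[OF r] gam_pos[OF r] unfolding beta_def by simp
  finally show ?thesis unfolding Amat_eq[OF r] using gam_pos[OF r] eps_nonneg[OF r] beta_pos[OF r]
    by (intro nsd_trace_nonpos_rank_one) auto
qed

lemma Amat_continuous: "continuous_on U Amat"
proof -
  have img: "norm ` U \<subseteq> {r0..R}" using norm_U by force
  have cn: "continuous_on U (norm :: real^'n \<Rightarrow> real)" by (intro continuous_intros)
  have "continuous_on U (\<lambda>y. gam (norm y))" "continuous_on U (\<lambda>y. eps (norm y))" "continuous_on U (\<lambda>y. beta (norm y))"
    by (rule continuous_on_compose2[OF radial_coefficients_continuous(1) cn img] continuous_on_compose2[OF radial_coefficients_continuous(2) cn img]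
        continuous_on_compose2[OF radial_coefficients_continuous(3) cn img])+
  moreover have "continuous_on U (\<lambda>y::real^'n. outer y y)"
    unfolding outer_def by (intro continuous_on_vec_lambda continuous_intros)
  moreover have "\<forall>y\<in>U. gam (norm y) \<noteq> 0 \<and> (norm y)\<^sup>2 * beta (norm y) \<noteq> 0"
    using norm_U gam_pos beta_pos r0pos by (fastforce simp: less_imp_neq[symmetric])
  ultimately have "continuous_on U (\<lambda>y. (1 / gam (norm y)) *\<^sub>R
      (mat 1 - (eps (norm y) / ((norm y)\<^sup>2 * beta (norm y))) *\<^sub>R outer y y))"
    by (intro continuous_intros) auto
  moreover have "Amat y = (1 / gam (norm y)) *\<^sub>R
      (mat 1 - (eps (norm y) / ((norm y)\<^sup>2 * beta (norm y))) *\<^sub>R outer y y)" if "y \<in> U" for y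
    using Amat_eq norm_U[OF that] by simp
  ultimately show ?thesis by (auto elim!: continuous_on_eq)
qed

text \<open>The drift is bounded by C2; this is where the constant C2 enters sR.\<close>
lemma bvec_bound: assumes r: "norm y \<in> {r0..R}" shows "norm (bvec y) \<le> C2"
proof -
  define m1 where "m1 = Sup ((\<lambda>s. \<bar>deriv F1 s\<bar>) ` {sl..sh})"
  define m2 where "m2 = Sup ((\<lambda>s. \<bar>deriv F2 s\<bar>) ` {sl..sh})"
  have "norm y > 0" using r r0pos by (simp del: zero_less_norm_iff)
  then have y0: "y \<noteq> 0" by auto
  have r0r: "0 < r0" "r0 \<le> norm y" using r r0pos by auto
  have G: "norm (Gvec (gpoly a al N) (ustar c y)) \<le> gpoly a al N (umag n c r0) * umag n c r0"
    if adm: "gpoly_admissible a al N" for a al N c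
  proof -
    have "norm (Gvec (gpoly a al N) (ustar c y)) = gpoly a al N (umag n c (norm y)) * umag n c (norm y)"
      using gpoly_pos[OF adm umag_nonneg, of n c "norm y"] unfolding Gvec_def
      by (simp add: norm_ustar[OF y0] n_card[symmetric] umag_nonneg)
    then show ?thesis using gpoly_flux_umag_bound[OF adm dim1 r0r] by simp
  qed
  have dm: "\<bar>deriv F1 (Shat (norm y))\<bar> \<le> m1" "\<bar>deriv F2 (Shat (norm y))\<bar> \<le> m2"
    unfolding m1_def m2_def using F1_bounds(4)[OF r] F2_bounds(4)[OF r] .
  have Y: "0 \<le> g1 (rho1 r0) * rho1 r0" "0 \<le> g2 (rho2 r0) * rho2 r0"
    using gpoly_pos[OF adm1 umag_nonneg] gpoly_pos[OF adm2 umag_nonneg] umag_nonneg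
    by (simp_all add: less_imp_le)
  have "norm (bvec y) \<le> \<bar>deriv F2 (Shat (norm y))\<bar> * norm (Gvec g2 (ustar c2 y))
      + \<bar>deriv F1 (Shat (norm y))\<bar> * norm (Gvec g1 (ustar c1 y))"
    unfolding bvec_def using norm_triangle_ineq4 by (metis norm_scaleR)
  also have "\<dots> \<le> m2 * (g2 (rho2 r0) * rho2 r0) + m1 * (g1 (rho1 r0) * rho1 r0)"
    using G[OF adm1] G[OF adm2] dm by (intro add_mono mult_mono) auto
  also have "\<dots> \<le> (m1 + m2) * (g1 (rho1 r0) * rho1 r0 + g2 (rho2 r0) * rho2 r0)"
    using dm Y by (simp add: algebra_simps)
  also have "\<dots> = C2" unfolding C2 mu3 d2 m1_def m2_def umag_def n_card by simp
  finally show ?thesis .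
qed

lemma bvec_radial_bound: "y \<in> U \<Longrightarrow> bvec y \<bullet> y \<le> C2 * R"
  using norm_cauchy_schwarz[of "bvec y" y] bvec_bound[of y] norm_U[of y] C2_nonneg
  by (smt (verit, best) greaterThanLessThan_iff greaterThanAtMost_iff atLeastAtMost_iff
      mult_mono norm_ge_zero)

text \<open>The radial variable xi(r) = xi0 + int_{r0}^r beta(rho) rho drho.  Its gradient
  beta(|x|) x is an eigenvector of B, so that A grad xi(|x|) = x.\<close>
definition xi0 :: real where
  "xi0 = C0 * r0\<^sup>2 / 2"

definition xi :: "real \<Rightarrow> real" where
  "xi r = xi0 + integral {r0..r} (\<lambda>\<rho>. beta \<rho> * \<rho>)"

lemma xi0_pos: "xi0 > 0" unfolding xi0_def using C0_pos r0pos by simp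

lemma xi_integrand_continuous: "continuous_on {r0..R} (\<lambda>\<rho>. beta \<rho> * \<rho>)"
  using radial_coefficients_continuous(3) by (intro continuous_intros)

lemma xi_has_derivative_within:
  "r \<in> {r0..R} \<Longrightarrow> (xi has_real_derivative beta r * r) (at r within {r0..R})"
  using integral_has_vector_derivative[OF xi_integrand_continuous, of r] unfolding xi_def[abs_def]
  by (auto intro!: derivative_eq_intros simp: has_real_derivative_iff_has_vector_derivative[symmetric])

lemma xi_continuous: "continuous_on {r0..R} xi"
  using xi_has_derivative_within by (intro DERIV_continuous_on) blast

text \<open>xi0 <= xi(r) <= C0 r^2/2, using 0 < beta <= C0.\<close>
lemma xi_bounds:
  assumes r: "r \<in> {r0..R}"
  shows "xi0 \<le> xi r" and "xi r \<le> C0 * r\<^sup>2 / 2"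
proof -
  have int: "(\<lambda>\<rho>. beta \<rho> * \<rho>) integrable_on {r0..r}"
    using r by (intro integrable_continuous_real continuous_on_subset[OF xi_integrand_continuous]) auto
  have "0 \<le> integral {r0..r} (\<lambda>\<rho>. beta \<rho> * \<rho>)"
    using int r beta_pos r0pos by (intro integral_nonneg) (auto intro!: mult_nonneg_nonneg less_imp_le)
  then show "xi0 \<le> xi r" unfolding xi_def by simp
  have lin: "((\<lambda>\<rho>. C0 * \<rho>) has_integral (C0 * r\<^sup>2 / 2 - C0 * r0\<^sup>2 / 2)) {r0..r}"
  proof -
    have "((\<lambda>\<rho>. C0 * \<rho>\<^sup>2 / 2) has_real_derivative C0 * x) (at x within {r0..r})" for x
      by (auto intro!: derivative_eq_intros simp: power2_eq_square)
    then show ?thesis using r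
      by (intro fundamental_theorem_of_calculus) (auto simp: has_real_derivative_iff_has_vector_derivative[symmetric])
  qed
  have "integral {r0..r} (\<lambda>\<rho>. beta \<rho> * \<rho>) \<le> integral {r0..r} (\<lambda>\<rho>. C0 * \<rho>)"
    using int lin r beta_le r0pos by (intro integral_le) (auto intro!: mult_right_mono)
  also have "\<dots> = C0 * r\<^sup>2 / 2 - C0 * r0\<^sup>2 / 2" using lin by (rule integral_unique)
  finally show "xi r \<le> C0 * r\<^sup>2 / 2" unfolding xi_def xi0_def by simp
qed

text \<open>Since beta >= C1 and kappa0 C1 = C0/2, the radial variable is dominated by kappa0 beta r^2.\<close>
lemma xi_le_kappa: assumes r: "r \<in> {r0..R}" shows "xi r \<le> kappa0 * (beta r * r\<^sup>2)"
proof -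
  have "xi r \<le> C0 * r\<^sup>2 / 2" by (rule xi_bounds(2)[OF r])
  also have "\<dots> = kappa0 * (C1 * r\<^sup>2)" unfolding kappa0 using C1_pos by simp
  also have "\<dots> \<le> kappa0 * (beta r * r\<^sup>2)" using beta_ge[OF r] kappa0_pos
    by (intro mult_left_mono mult_right_mono) auto
  finally show ?thesis .
qed

lemma xi_norm_has_derivative:
  fixes y :: "real^'n"
  assumes y: "norm y \<in> {r0<..<R}"
  shows "((\<lambda>y. xi (norm y)) has_derivative (\<lambda>h. beta (norm y) * (y \<bullet> h))) (at y)"
proof -
  have y0: "y \<noteq> 0" using y r0pos by auto
  have "(xi has_real_derivative beta (norm y) * norm y) (at (norm y))"
    using xi_has_derivative_within[of "norm y"] y at_within_interior[of "norm y" "{r0..R}"] by auto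
  then have "((xi \<circ> norm) has_derivative ((*) (beta (norm y) * norm y) \<circ> (\<lambda>h. h \<bullet> sgn y))) (at y)"
    using has_derivative_norm[OF y0] by (intro diff_chain_at) (auto simp: has_field_derivative_def)
  moreover have "(*) (beta (norm y) * norm y) \<circ> (\<lambda>h. h \<bullet> sgn y) = (\<lambda>h. beta (norm y) * (y \<bullet> h))"
    using y0 by (auto simp: sgn_div_norm inner_commute field_simps)
  ultimately show ?thesis by (simp add: o_def)
qed

text \<open>The barrier: a decaying self-similar profile in (xi, tau) with tau = (t + epsilon)/kappa0,
  normalised by cc so that cc times the profile never exceeds 1 on the annulus.\<close>
definition tau :: "real \<Rightarrow> real \<Rightarrow> real" where
  "tau \<epsilon> t = (t + \<epsilon>) / kappa0"

definition cc :: real where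
  "cc = (exp 1 * xi0 / sR) powr sR"

definition barrier :: "real \<Rightarrow> real \<Rightarrow> real^'n \<Rightarrow> real \<Rightarrow> real" where
  "barrier M \<epsilon> y t = M + \<epsilon> * (1 + t) + M * cc * heat_kernel sR xi0 (tau \<epsilon> 0)
      - M * cc * heat_kernel sR (xi (norm y)) (tau \<epsilon> t)"

definition hfac :: "real \<Rightarrow> real \<Rightarrow> real^'n \<Rightarrow> real \<Rightarrow> real" where
  "hfac M \<epsilon> y t = M * cc * heat_kernel sR (xi (norm y)) (tau \<epsilon> t) / tau \<epsilon> t"

lemma tau_pos: "t + \<epsilon> > 0 \<Longrightarrow> tau \<epsilon> t > 0" unfolding tau_def using kappa0_pos by simp

lemma heat_kernel_xi_has_derivative:
  fixes y :: "real^'n"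
  assumes y: "norm y \<in> {r0<..<R}" and tp: "\<tau> > 0"
  shows "((\<lambda>y. heat_kernel sR (xi (norm y)) \<tau>) has_derivative
      (\<lambda>h. (- heat_kernel sR (xi (norm y)) \<tau> / \<tau>) * (beta (norm y) * (y \<bullet> h)))) (at y)"
proof -
  have "((\<lambda>\<xi>. heat_kernel sR \<xi> \<tau>) has_derivative (*) (- heat_kernel sR (xi (norm y)) \<tau> / \<tau>)) (at (xi (norm y)))"
    using heat_kernel_deriv_xi[OF tp] by (simp add: has_field_derivative_def)
  from diff_chain_at[OF xi_norm_has_derivative[OF y] this] show ?thesis by (simp add: o_def)
qed

lemma barrier_space_derivative:
  fixes y :: "real^'n"
  assumes y: "norm y \<in> {r0<..<R}" and tp: "t + \<epsilon> > 0"
  shows "((\<lambda>y. barrier M \<epsilon> y t) has_derivative (\<lambda>h. ((hfac M \<epsilon> y t * beta (norm y)) *\<^sub>R y) \<bullet> h)) (at y)"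
proof -
  have "((\<lambda>y. barrier M \<epsilon> y t) has_derivative (\<lambda>h. 0 - M * cc *
      ((- heat_kernel sR (xi (norm y)) (tau \<epsilon> t) / tau \<epsilon> t) * (beta (norm y) * (y \<bullet> h))))) (at y)"
    unfolding barrier_def
    by (intro has_derivative_diff has_derivative_const has_derivative_mult_right
        heat_kernel_xi_has_derivative[OF y tau_pos[OF tp]])
  then show ?thesis unfolding hfac_def by (simp add: algebra_simps)
qed

lemma gradx_barrier:
  fixes y :: "real^'n"
  assumes "norm y \<in> {r0<..<R}" "t + \<epsilon> > 0"
  shows "gradx (barrier M \<epsilon>) y t = (hfac M \<epsilon> y t * beta (norm y)) *\<^sub>R y"
  using barrier_space_derivative[OF assms] by (rule gradx_unique)

lemma hfac_has_derivative:
  fixes y :: "real^'n"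
  assumes y: "norm y \<in> {r0<..<R}" and tp: "t + \<epsilon> > 0"
  shows "((\<lambda>y. hfac M \<epsilon> y t) has_derivative
      (\<lambda>h. - (hfac M \<epsilon> y t / tau \<epsilon> t) * (beta (norm y) * (y \<bullet> h)))) (at y)"
proof -
  have "((\<lambda>y. (M * cc / tau \<epsilon> t) * heat_kernel sR (xi (norm y)) (tau \<epsilon> t)) has_derivative
      (\<lambda>h. (M * cc / tau \<epsilon> t) * ((- heat_kernel sR (xi (norm y)) (tau \<epsilon> t) / tau \<epsilon> t)
        * (beta (norm y) * (y \<bullet> h))))) (at y)"
    by (rule has_derivative_mult_right[OF heat_kernel_xi_has_derivative[OF y tau_pos[OF tp]]])
  then show ?thesis unfolding hfac_def[abs_def] by (simp add: algebra_simps)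
qed

text \<open>Since grad v is parallel to x, the flux A grad v is simply hfac times x.\<close>
lemma Amat_grad_barrier:
  fixes y :: "real^'n"
  assumes y: "y \<in> U" and tp: "t + \<epsilon> > 0"
  shows "Amat y *v gradx (barrier M \<epsilon>) y t = hfac M \<epsilon> y t *\<^sub>R y"
proof -
  have r: "norm y \<in> {r0..R}" using norm_U[OF y] by auto
  show ?thesis unfolding gradx_barrier[OF norm_U[OF y] tp]
    using beta_pos[OF r] by (simp add: matrix_vector_mult_scaleR Amat_radial[OF r])
qed

lemma flux_barrier_has_derivative:
  fixes x :: "real^'n"
  assumes x: "x \<in> U" and tp: "t + \<epsilon> > 0"
  shows "((\<lambda>y. Amat y *v gradx (barrier M \<epsilon>) y t) has_derivative
     (\<lambda>e. (- (hfac M \<epsilon> x t / tau \<epsilon> t) * (beta (norm x) * (x \<bullet> e))) *\<^sub>R x + hfac M \<epsilon> x t *\<^sub>R e)) (at x)"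
proof -
  have "((\<lambda>y. hfac M \<epsilon> y t *\<^sub>R y) has_derivative
     (\<lambda>e. (- (hfac M \<epsilon> x t / tau \<epsilon> t) * (beta (norm x) * (x \<bullet> e))) *\<^sub>R x + hfac M \<epsilon> x t *\<^sub>R e)) (at x)"
    using has_derivative_scaleR[OF hfac_has_derivative[OF norm_U[OF x] tp] has_derivative_ident]
    by (simp add: add.commute)
  then show ?thesis
    by (rule has_derivative_transform_within_open[OF _ Uopen x]) (simp add: Amat_grad_barrier tp)
qed

lemma divg_flux_barrier:
  fixes x :: "real^'n"
  assumes x: "x \<in> U" and tp: "t + \<epsilon> > 0"
  shows "divg (\<lambda>y. Amat y *v gradx (barrier M \<epsilon>) y t) x
     = real n * hfac M \<epsilon> x t - (hfac M \<epsilon> x t / tau \<epsilon> t) * beta (norm x) * (x \<bullet> x)"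
proof -
  define H where "H = hfac M \<epsilon> x t"
  define a where "a = - (H / tau \<epsilon> t) * beta (norm x)"
  have "divg (\<lambda>y. Amat y *v gradx (barrier M \<epsilon>) y t) x = (\<Sum>i\<in>UNIV. a * (x $ i * x $ i) + H)"
    unfolding divg_def frechet_derivative_at[OF flux_barrier_has_derivative[OF x tp], symmetric]
    unfolding a_def H_def by (simp add: inner_axis mult.assoc)
  also have "\<dots> = a * (x \<bullet> x) + real CARD('n) * H"
    by (simp add: sum.distrib sum_distrib_left inner_vec_def)
  finally show ?thesis unfolding a_def H_def n_card by simp
qed

lemma barrier_time_derivative:
  fixes y :: "real^'n"
  assumes tp: "t + \<epsilon> > 0"
  shows "((\<lambda>t. barrier M \<epsilon> y t) has_real_derivative \<epsilon> - M * cc * (heat_kernel sR (xi (norm y)) (tau \<epsilon> t)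
      * (- sR / tau \<epsilon> t + xi (norm y) / (tau \<epsilon> t)\<^sup>2)) / kappa0) (at t)"
proof -
  have "((\<lambda>t. tau \<epsilon> t) has_real_derivative 1 / kappa0) (at t)"
    unfolding tau_def[abs_def] using kappa0_pos by (auto intro!: derivative_eq_intros)
  from DERIV_chain2[OF heat_kernel_deriv_tau[OF tau_pos[OF tp]] this]
  have "((\<lambda>t. barrier M \<epsilon> y t) has_real_derivative 0 + \<epsilon> * (0 + 1) + 0 - M * cc * ((heat_kernel sR (xi (norm y)) (tau \<epsilon> t)
      * (- sR / tau \<epsilon> t + xi (norm y) / (tau \<epsilon> t)\<^sup>2)) * (1 / kappa0))) (at t)"
    unfolding barrier_def[abs_def] by (intro DERIV_diff DERIV_add DERIV_const DERIV_cmult DERIV_ident)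
  then show ?thesis by simp
qed

lemma dtime_barrier:
  fixes x :: "real^'n"
  assumes tp: "t + \<epsilon> > 0" and t: "t \<in> {0<..T}"
  shows "dtime (barrier M \<epsilon>) {0<..T} x t = \<epsilon> - M * cc * (heat_kernel sR (xi (norm x)) (tau \<epsilon> t)
      * (- sR / tau \<epsilon> t + xi (norm x) / (tau \<epsilon> t)\<^sup>2)) / kappa0"
proof -
  have "t islimpt {0<..T}" using t by simp
  then have "at t within {0<..T} \<noteq> bot" by (simp add: trivial_limit_within)
  moreover have "((\<lambda>t. barrier M \<epsilon> x t) has_vector_derivative \<epsilon> - M * cc * (heat_kernel sR (xi (norm x)) (tau \<epsilon> t)
      * (- sR / tau \<epsilon> t + xi (norm x) / (tau \<epsilon> t)\<^sup>2)) / kappa0) (at t within {0<..T})"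
    using barrier_time_derivative[OF tp, of M x]
    by (simp add: has_real_derivative_iff_has_vector_derivative has_vector_derivative_at_within)
  ultimately show ?thesis unfolding dtime_def by (rule vector_derivative_within)
qed

text \<open>The time derivative of the profile
  produces sR/kappa0 = n + C2 R, which absorbs the divergence term n and the drift term, while
  xi <= kappa0 beta |x|^2 controls the remaining term.\<close>
lemma Lop_barrier_ge:
  fixes x :: "real^'n"
  assumes x: "x \<in> U" and t: "t \<in> {0<..T}" and ep: "\<epsilon> > 0" and M: "M \<ge> 0"
  shows "\<epsilon> \<le> Lop Amat bvec T (barrier M \<epsilon>) x t"
proof -
  have tp: "t + \<epsilon> > 0" using t ep by simp
  define \<tau> where "\<tau> = tau \<epsilon> t"
  define \<xi> where "\<xi> = xi (norm x)"
  define H where "H = hfac M \<epsilon> x t"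
  define b where "b = bvec x \<bullet> x"
  define \<beta>r2 where "\<beta>r2 = beta (norm x) * (x \<bullet> x)"
  have taup: "\<tau> > 0" unfolding \<tau>_def using tau_pos[OF tp] .
  have HG: "M * cc * heat_kernel sR \<xi> \<tau> = H * \<tau>"
    unfolding H_def hfac_def \<tau>_def[symmetric] \<xi>_def[symmetric] using taup by simp
  have Hp: "H \<ge> 0" unfolding H_def hfac_def \<tau>_def[symmetric]
    using M taup heat_kernel_pos[OF taup] unfolding cc_def
    by (intro divide_nonneg_pos mult_nonneg_nonneg) (auto simp: less_imp_le)
  have dt: "M * cc * (heat_kernel sR \<xi> \<tau> * (- sR / \<tau> + \<xi> / \<tau>\<^sup>2)) = H * (\<xi> / \<tau> - sR)"
  proof -
    have "M * cc * (heat_kernel sR \<xi> \<tau> * (- sR / \<tau> + \<xi> / \<tau>\<^sup>2)) = H * \<tau> * (- sR / \<tau> + \<xi> / \<tau>\<^sup>2)"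
      unfolding HG[symmetric] by (simp add: mult.assoc)
    also have "\<dots> = H * (\<xi> / \<tau> - sR)" using taup by (simp add: field_simps power2_eq_square)
    finally show ?thesis .
  qed
  have "Lop Amat bvec T (barrier M \<epsilon>) x t
     = \<epsilon> - M * cc * (heat_kernel sR \<xi> \<tau> * (- sR / \<tau> + \<xi> / \<tau>\<^sup>2)) / kappa0
       - (real n * H - (H / \<tau>) * beta (norm x) * (x \<bullet> x)) - bvec x \<bullet> (H *\<^sub>R x)"
    unfolding Lop_def dtime_barrier[OF tp t] divg_flux_barrier[OF x tp] Amat_grad_barrier[OF x tp]
    unfolding \<xi>_def \<tau>_def H_def ..
  also have "\<dots> = \<epsilon> + H * ((sR / kappa0 - real n - b) + (\<beta>r2 - \<xi> / kappa0) / \<tau>)"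
    unfolding dt b_def \<beta>r2_def using taup kappa0_pos by (simp add: field_simps)
  also have "sR / kappa0 - real n = C2 * R" unfolding sR n_card using kappa0_pos by simp
  also have "\<epsilon> \<le> \<epsilon> + H * ((C2 * R - b) + (\<beta>r2 - \<xi> / kappa0) / \<tau>)"
  proof -
    have "C2 * R - b \<ge> 0" unfolding b_def using bvec_radial_bound[OF x] by simp
    moreover have "\<xi> \<le> kappa0 * \<beta>r2" unfolding \<xi>_def \<beta>r2_def
      using xi_le_kappa[of "norm x"] norm_U[OF x] by (simp add: power2_norm_eq_inner)
    then have "\<beta>r2 - \<xi> / kappa0 \<ge> 0" using kappa0_pos by (simp add: field_simps)
    ultimately show ?thesis using Hp taup by simp
  qed
  finally show ?thesis .
qed

lemma barrier_diff21: assumes ep: "\<epsilon> > 0" shows "diff21 (barrier M \<epsilon>) U T"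
  unfolding diff21_def
proof (intro ballI conjI)
  fix x t assume x: "x \<in> U" and t: "t \<in> {0<..T}"
  have tp: "t + \<epsilon> > 0" using t ep by simp
  show "(\<lambda>y. barrier M \<epsilon> y t) differentiable (at x)"
    using barrier_space_derivative[OF norm_U[OF x] tp] differentiable_def by blast
  have x0: "x \<noteq> 0" using norm_U[OF x] r0pos by auto
  have "beta differentiable (at (norm x))" using beta_differentiable norm_U[OF x] by blast
  then have "(beta \<circ> norm) differentiable (at x)" by (rule differentiable_chain_at[OF differentiable_norm_at[OF x0]])
  moreover have "(\<lambda>y. hfac M \<epsilon> y t) differentiable (at x)"
    using hfac_has_derivative[OF norm_U[OF x] tp] differentiable_def by blast
  ultimately have "(\<lambda>y. (hfac M \<epsilon> y t * beta (norm y)) *\<^sub>R y) differentiable (at x)"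
    by (intro differentiable_scaleR differentiable_mult differentiable_ident) (simp_all add: o_def)
  then obtain D where "((\<lambda>y. (hfac M \<epsilon> y t * beta (norm y)) *\<^sub>R y) has_derivative D) (at x)"
    unfolding differentiable_def by blast
  then have "((\<lambda>y. gradx (barrier M \<epsilon>) y t) has_derivative D) (at x)"
    by (rule has_derivative_transform_within_open[OF _ Uopen x]) (simp add: gradx_barrier[OF norm_U tp])
  then show "(\<lambda>y. gradx (barrier M \<epsilon>) y t) differentiable (at x)" unfolding differentiable_def by blast
  show "(\<lambda>s. barrier M \<epsilon> x s) differentiable (at t within {0<..T})"
    using barrier_time_derivative[OF tp] unfolding real_differentiable_def
    by (blast intro: has_field_derivative_at_within)
qed

lemma barrier_continuous:
  assumes ep: "\<epsilon> > 0"
  shows "continuous_on (closure U \<times> {0..T}) (\<lambda>(y,t). barrier M \<epsilon> y t)"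
proof -
  have img: "(\<lambda>p. norm (fst p)) ` (closure U \<times> {0..T}) \<subseteq> {r0..R}" using norm_closure_U by auto
  have "continuous_on (closure U \<times> {0..T}) (\<lambda>p::(real^'n) \<times> real. xi (norm (fst p)))"
    by (rule continuous_on_compose2[OF xi_continuous _ img]) (intro continuous_intros)
  moreover have "continuous_on (closure U \<times> {0..T}) (\<lambda>p::(real^'n) \<times> real. tau \<epsilon> (snd p))"
    unfolding tau_def using kappa0_pos by (intro continuous_intros) auto
  moreover have "\<forall>p\<in>closure U \<times> {0..T}. tau \<epsilon> (snd p) \<noteq> 0"
  proof
    fix p assume "p \<in> closure U \<times> {0..T}"
    then have "snd p + \<epsilon> > 0" using ep by auto
    then show "tau \<epsilon> (snd p) \<noteq> 0" using tau_pos by force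
  qed
  ultimately have "continuous_on (closure U \<times> {0..T})
      (\<lambda>p. heat_kernel sR (xi (norm (fst p))) (tau \<epsilon> (snd p)))"
    unfolding heat_kernel_def by (intro continuous_intros) auto
  then show ?thesis unfolding barrier_def case_prod_unfold by (intro continuous_intros)
qed

lemma flux_barrier_differentiable:
  "x \<in> U \<Longrightarrow> t + \<epsilon> > 0 \<Longrightarrow> (\<lambda>y. Amat y *v gradx (barrier M \<epsilon>) y t) differentiable (at x)"
  using flux_barrier_has_derivative differentiable_def by blast

text \<open>cc is chosen so that cc times the profile is at most 1 wherever xi >= xi0.\<close>
lemma cc_heat_kernel_le_one:
  assumes x: "xi0 \<le> \<xi>" and t: "\<tau> > 0"
  shows "cc * heat_kernel sR \<xi> \<tau> \<le> 1"
proof -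
  have xp: "\<xi> > 0" using x xi0_pos by simp
  have "cc * heat_kernel sR \<xi> \<tau> \<le> (exp 1 * xi0 / sR) powr sR * (sR / (exp 1 * \<xi>)) powr sR"
    unfolding cc_def using heat_kernel_le[OF sR_pos xp t] by (intro mult_left_mono) auto
  also have "\<dots> = (xi0 / \<xi>) powr sR"
    using xi0_pos xp sR_pos by (simp add: powr_mult[symmetric] field_simps)
  also have "\<dots> \<le> 1 powr sR" using xi0_pos x sR_pos by (intro powr_mono2) auto
  finally show ?thesis by simp
qed

lemma cc_heat_kernel_final_ge:
  assumes x: "\<xi> \<le> C0 * R\<^sup>2 / 2" and ep: "\<epsilon> > 0"
  shows "eta0 * (q * R\<^sup>2 / (q * R\<^sup>2 + \<epsilon>)) powr sR \<le> cc * heat_kernel sR \<xi> (tau \<epsilon> (q * R\<^sup>2))"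
proof -
  define T where "T = q * R\<^sup>2"
  define \<tau> where "\<tau> = tau \<epsilon> T"
  have Tp: "T > 0" unfolding T_def using q_pos R r0pos by simp
  have tp: "\<tau> > 0" unfolding \<tau>_def using tau_pos Tp ep by simp
  have sT: "sR * (T / kappa0) = C0 * R\<^sup>2 / 2" unfolding T_def q using sR_pos kappa0_pos by (simp add: field_simps)
  have "\<xi> \<le> sR * \<tau>"
  proof -
    have "sR * (T / kappa0) \<le> sR * \<tau>" unfolding \<tau>_def tau_def
      using sR_pos kappa0_pos ep by (intro mult_left_mono divide_right_mono) auto
    then show ?thesis using x unfolding sT by linarith
  qed
  then have "cc * (\<tau> powr (- sR) * exp (- sR)) \<le> cc * heat_kernel sR \<xi> \<tau>"
    using heat_kernel_ge[OF tp] cc_def by (intro mult_left_mono) auto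
  moreover have "cc * (\<tau> powr (- sR) * exp (- sR)) = (xi0 / (sR * \<tau>)) powr sR"
    unfolding cc_def using xi0_pos sR_pos tp
    by (simp add: powr_divide powr_mult powr_minus powr_def[of "exp 1"] exp_minus field_simps)
  moreover have "xi0 / (sR * \<tau>) = (r0 / R)\<^sup>2 * (T / (T + \<epsilon>))"
  proof -
    have e: "sR * \<tau> = (C0 * R\<^sup>2 / 2) * ((T + \<epsilon>) / T)"
      unfolding sT[symmetric] \<tau>_def tau_def using Tp kappa0_pos by (simp add: field_simps)
    show ?thesis unfolding xi0_def e using Tp R r0pos C0_pos ep by (simp add: power_divide)
  qed
  moreover have "((r0 / R)\<^sup>2 * (T / (T + \<epsilon>))) powr sR = eta0 * (T / (T + \<epsilon>)) powr sR"
  proof -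
    have "((r0 / R)\<^sup>2) powr sR = (r0 / R) powr (2 * sR)"
      using R r0pos by (simp add: powr_powr[symmetric] powr_numeral)
    then show ?thesis unfolding eta0 powr_mult[of "(r0 / R)\<^sup>2" "T / (T + \<epsilon>)" sR] by simp
  qed
  ultimately show ?thesis unfolding T_def \<tau>_def by simp
qed

text \<open>Parabolic boundary values: v >= M at t = 0 (the profile decreases in xi and xi >= xi0),
  v >= 0 on the lateral boundary, and the bound on v at the final time.\<close>
lemma barrier_initial:
  assumes M: "M \<ge> 0" and ep: "\<epsilon> > 0" and y: "y \<in> closure U"
  shows "M \<le> barrier M \<epsilon> y 0"
proof -
  have "heat_kernel sR (xi (norm y)) (tau \<epsilon> 0) \<le> heat_kernel sR xi0 (tau \<epsilon> 0)"
    using heat_kernel_antimono tau_pos ep xi_bounds(1) norm_closure_U[OF y] by simp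
  then have "M * cc * heat_kernel sR (xi (norm y)) (tau \<epsilon> 0) \<le> M * cc * heat_kernel sR xi0 (tau \<epsilon> 0)"
    using M cc_def by (intro mult_left_mono) auto
  then show ?thesis unfolding barrier_def using ep by simp
qed

lemma barrier_nonneg:
  assumes M: "M \<ge> 0" and ep: "\<epsilon> > 0" and y: "y \<in> closure U" and t: "t \<ge> 0"
  shows "0 \<le> barrier M \<epsilon> y t"
proof -
  have "M * (cc * heat_kernel sR (xi (norm y)) (tau \<epsilon> t)) \<le> M * 1"
    using cc_heat_kernel_le_one[OF xi_bounds(1)[OF norm_closure_U[OF y]]] tau_pos t ep M
    by (intro mult_left_mono) auto
  moreover have "0 \<le> M * cc * heat_kernel sR xi0 (tau \<epsilon> 0)"
    using M heat_kernel_pos[OF tau_pos[of 0 \<epsilon>]] ep unfolding cc_def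
    by (intro mult_nonneg_nonneg) (auto simp: less_imp_le)
  moreover have "0 \<le> \<epsilon> * (1 + t)" using ep t by simp
  ultimately show ?thesis unfolding barrier_def by (simp add: mult.assoc)
qed

lemma barrier_final:
  assumes M: "M \<ge> 0" and ep: "\<epsilon> > 0" and x: "x \<in> closure U"
  shows "barrier M \<epsilon> x (q * R\<^sup>2) \<le> M + \<epsilon> * (1 + q * R\<^sup>2) + M * cc * heat_kernel sR xi0 (\<epsilon> / kappa0)
      - M * (eta0 * (q * R\<^sup>2 / (q * R\<^sup>2 + \<epsilon>)) powr sR)"
proof -
  have nx: "norm x \<in> {r0..R}" using norm_closure_U[OF x] .
  have "(norm x)\<^sup>2 \<le> R\<^sup>2" using nx r0pos by (intro power_mono) auto
  then have "C0 * (norm x)\<^sup>2 / 2 \<le> C0 * R\<^sup>2 / 2" using C0_pos by (intro divide_right_mono mult_left_mono) auto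
  then have "xi (norm x) \<le> C0 * R\<^sup>2 / 2" using xi_bounds(2)[OF nx] by linarith
  then have "M * (eta0 * (q * R\<^sup>2 / (q * R\<^sup>2 + \<epsilon>)) powr sR)
      \<le> M * (cc * heat_kernel sR (xi (norm x)) (tau \<epsilon> (q * R\<^sup>2)))"
    using cc_heat_kernel_final_ge ep M by (intro mult_left_mono) auto
  then show ?thesis unfolding barrier_def tau_def by (simp add: algebra_simps)
qed


lemma subsolution_below_barrier:
  assumes T: "T > 0" and dw: "diff21 w U T"
    and cont: "continuous_on (closure U \<times> {0..T}) (\<lambda>(x,t). w x t)"
    and Lw: "\<forall>x\<in>U. \<forall>t\<in>{0<..T}. Lop Amat bvec T w x t \<le> 0"
    and bdry: "\<forall>x\<in>frontier U. \<forall>t\<in>{0<..T}. w x t \<le> 0"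
    and M: "M \<ge> 0" and init: "\<forall>x\<in>closure U. w x 0 \<le> M" and ep: "\<epsilon> > 0"
  shows "\<forall>x\<in>closure U. \<forall>t\<in>{0..T}. w x t \<le> barrier M \<epsilon> x t"
proof (rule comparison_principle[OF Uopen Ubdd T _ _ _ dw barrier_diff21[OF ep] _ _ _ Lw])
  show "continuous_on (closure U \<times> {0..T}) (\<lambda>(x,t). w x t - barrier M \<epsilon> x t)"
    using continuous_on_diff[OF cont barrier_continuous[OF ep]] by (simp add: case_prod_unfold)
  show "\<forall>x\<in>closure U. w x 0 \<le> barrier M \<epsilon> x 0"
    using init barrier_initial[OF M ep] order_trans by blast
  show "\<forall>x\<in>frontier U. \<forall>t\<in>{0<..T}. w x t \<le> barrier M \<epsilon> x t"
  proof (intro ballI)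
    fix x t assume x: "x \<in> frontier U" and t: "t \<in> {0<..T}"
    then have "w x t \<le> 0" using bdry by blast
    also have "0 \<le> barrier M \<epsilon> x t" using barrier_nonneg[OF M ep] x t by (simp add: frontier_def)
    finally show "w x t \<le> barrier M \<epsilon> x t" .
  qed
  show "\<forall>x\<in>U. \<forall>t\<in>{0<..T}. Lop Amat bvec T (barrier M \<epsilon>) x t > 0"
  proof (intro ballI)
    fix x t assume "x \<in> U" "t \<in> {0<..T}"
    then show "Lop Amat bvec T (barrier M \<epsilon>) x t > 0" using Lop_barrier_ge[OF _ _ ep M] ep by fastforce
  qed
  show "\<forall>x\<in>U. \<forall>t\<in>{0<..T}. (\<lambda>y. Amat y *v gradx (barrier M \<epsilon>) y t) differentiable (at x)"
  proof (intro ballI)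
    fix x t assume "x \<in> U" "t \<in> {0<..T}"
    then show "(\<lambda>y. Amat y *v gradx (barrier M \<epsilon>) y t) differentiable (at x)"
      using flux_barrier_differentiable ep by simp
  qed
  show "\<forall>x\<in>U. continuous (at x) Amat"
    using Amat_continuous Uopen continuous_on_eq_continuous_at by blast
  show "\<forall>x\<in>U. nsd_trace_nonpos (Amat x)"
    using Amat_nsd_trace_nonpos norm_U by force
qed

lemma final_time_bound:
  assumes dw: "diff21 w U (q * R\<^sup>2)"
    and cont: "continuous_on (closure U \<times> {0..q * R\<^sup>2}) (\<lambda>(x,t). w x t)"
    and Lw: "\<forall>x\<in>U. \<forall>t\<in>{0<..q * R\<^sup>2}. Lop Amat bvec (q * R\<^sup>2) w x t \<le> 0"
    and bdry: "\<forall>x\<in>frontier U. \<forall>t\<in>{0<..q * R\<^sup>2}. w x t \<le> 0"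
    and M: "M \<ge> 0" and init: "\<forall>x\<in>closure U. w x 0 \<le> M" and x: "x \<in> U"
  shows "w x (q * R\<^sup>2) \<le> M * (1 - eta0)"
proof -
  define T where "T = q * R\<^sup>2"
  have T: "T > 0" unfolding T_def using q_pos R r0pos by simp
  define bound where "bound \<epsilon> = M + \<epsilon> * (1 + T) + M * cc * heat_kernel sR xi0 (\<epsilon> / kappa0)
      - M * (eta0 * (T / (T + \<epsilon>)) powr sR)" for \<epsilon>
  have "(bound \<longlongrightarrow> M + 0 * (1 + T) + M * cc * 0 - M * (eta0 * (T / (T + 0)) powr sR)) (at_right 0)"
    unfolding bound_def using heat_kernel_vanishes[OF xi0_pos kappa0_pos] T
    by (intro tendsto_intros) auto
  then have lim: "(bound \<longlongrightarrow> M * (1 - eta0)) (at_right 0)" using T by (simp add: algebra_simps)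
  have "\<forall>\<^sub>F \<epsilon> in at_right 0. w x T \<le> bound \<epsilon>"
    using eventually_at_right_less[of 0]
  proof eventually_elim
    case (elim \<epsilon>)
    have xc: "x \<in> closure U" using x closure_subset by auto
    have "w x T \<le> barrier M \<epsilon> x T"
      using subsolution_below_barrier[OF T dw[folded T_def] cont[folded T_def] Lw[folded T_def]
          bdry[folded T_def] M init elim] xc T by simp
    also have "\<dots> \<le> bound \<epsilon>" unfolding bound_def T_def using barrier_final[OF M elim xc] .
    finally show ?case .
  qed
  then show ?thesis using tendsto_lowerbound[OF lim] unfolding T_def by simp
qed

text \<open>The decay estimate in terms of the positive parts of the suprema; the proof even
  gives the stronger factor 1 - eta0.\<close>
lemma decay_estimate:
  assumes wC21: "C21 w U (q * R\<^sup>2)"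
    and wcont: "continuous_on (closure (U \<times> {0<..q * R\<^sup>2})) (\<lambda>(x,t). w x t)"
    and Lw: "\<forall>x\<in>U. \<forall>t\<in>{0<..q * R\<^sup>2}. Lop Amat bvec (q * R\<^sup>2) w x t \<le> 0"
    and wbdry: "\<forall>x\<in>frontier U. \<forall>t\<in>{0<..<q * R\<^sup>2}. w x t \<le> 0"
  shows "Sup (insert 0 ((\<lambda>x. w x (q * R\<^sup>2)) ` U))
           \<le> 1 / (1 + eta0) * Sup (insert 0 ((\<lambda>x. w x 0) ` U))"
proof -
  define M where "M = Sup (insert 0 ((\<lambda>x. w x 0) ` U))"
  have T: "q * R\<^sup>2 > 0" using q_pos R r0pos by simp
  have cont: "continuous_on (closure U \<times> {0..q * R\<^sup>2}) (\<lambda>(x,t). w x t)"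
    using wcont T by (simp add: closure_Times)
  have "continuous_on (closure U) (\<lambda>x. (\<lambda>(x,t). w x t) (x, 0))"
    using T by (intro continuous_on_compose2[OF cont]) (auto intro!: continuous_intros)
  then have M0: "0 \<le> M" and init: "\<forall>x\<in>closure U. w x 0 \<le> M"
    using Sup_insert_zero_bounds[OF Ubdd] unfolding M_def by auto
  have bdry: "\<forall>x\<in>frontier U. \<forall>t\<in>{0<..q * R\<^sup>2}. w x t \<le> 0"
    using boundary_inequality_closure[OF T cont] wbdry frontier_def by fastforce
  have "\<forall>x\<in>U. w x (q * R\<^sup>2) \<le> M * (1 - eta0)"
    using final_time_bound[OF C21_imp_diff21[OF wC21] cont Lw bdry M0 init] by blast
  moreover have "M * (1 - eta0) \<le> 1 / (1 + eta0) * M"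
  proof -
    have "eta0 \<ge> 0" unfolding eta0 by simp
    then have "1 - eta0 \<le> 1 / (1 + eta0)" by (simp add: field_simps)
    then have "M * (1 - eta0) \<le> M * (1 / (1 + eta0))" using M0 by (rule mult_left_mono)
    then show ?thesis by simp
  qed
  moreover have "0 \<le> 1 / (1 + eta0) * M" using M0 unfolding eta0 by simp
  ultimately show ?thesis unfolding M_def[symmetric]
    by (intro Sup_insert_zero_le) (auto intro: order_trans)
qed

end

theorem lemma4p3:
  fixes a1 al1 a2 al2 :: "nat \<Rightarrow> real" and N1 N2 :: nat
    and f1 f2 pc' :: "real \<Rightarrow> real"
    and r0 c1 c2 s0 R sl sh :: real
    and Shat :: "real \<Rightarrow> real"
    and U :: "(real^'n) set"
    and w :: "real^'n \<Rightarrow> real \<Rightarrow> real"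
    and d0 d1 d2 d3 d4 mu1 mu2 mu3 C0 C1 C2 kappa0 sR q eta0 :: real
  assumes dim: "CARD('n) \<ge> 2"
    and g1: "gpoly_admissible a1 al1 N1" and g2: "gpoly_admissible a2 al2 N2"
    and f1c: "continuous_on {0..1} f1" and f2c: "continuous_on {0..1} f2"
    and f1d: "\<forall>s\<in>{0<..<1}. f1 differentiable (at s)" and f1dc: "continuous_on {0<..<1} (deriv f1)"
    and f2d: "\<forall>s\<in>{0<..<1}. f2 differentiable (at s)" and f2dc: "continuous_on {0<..<1} (deriv f2)"
    and f10: "f1 0 = 0" and f21: "f2 1 = 0"
    and f1mono: "\<forall>s\<in>{0<..<1}. deriv f1 s > 0" and f2mono: "\<forall>s\<in>{0<..<1}. deriv f2 s < 0"
    and pcd: "\<forall>s\<in>{0<..<1}. pc' differentiable (at s)" and pcdc: "continuous_on {0<..<1} (deriv pc')"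
    and pcpos: "\<forall>s\<in>{0<..<1}. pc' s > 0"
    and r0pos: "r0 > 0" and cnz: "c1\<^sup>2 + c2\<^sup>2 > 0" and s0: "0 < s0" "s0 < 1"
    and R: "r0 < R"
    and Sinit: "Shat r0 = s0"
    and Sode: "\<forall>r\<in>{r0..R}. (Shat has_real_derivative
        (Gs (gpoly a2 al2 N2) (c2 * r powr (1 - real CARD('n))) * Ffun pc' f2 (Shat r)
         - Gs (gpoly a1 al1 N1) (c1 * r powr (1 - real CARD('n))) * Ffun pc' f1 (Shat r)))
        (at r within {r0..R})"
    and Srange: "\<forall>r\<in>{r0..R}. 0 < Shat r \<and> Shat r < 1"
    and Sbounds: "0 < sl" "sh < 1" "\<forall>r\<in>{r0..R}. sl \<le> Shat r \<and> Shat r \<le> sh"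
    and Uopen: "open U" and Ubdd: "bounded U" and Usub: "U \<subseteq> ball 0 R - cball 0 r0"
    and d0: "d0 = min (gpoly a1 al1 N1 0) (gpoly a2 al2 N2 0)"
    and d1: "d1 = gpoly a1 al1 N1 (\<bar>c1\<bar> * r0 powr (1 - real CARD('n)))
                + gpoly a2 al2 N2 (\<bar>c2\<bar> * r0 powr (1 - real CARD('n)))"
    and d2: "d2 = gpoly a1 al1 N1 (\<bar>c1\<bar> * r0 powr (1 - real CARD('n))) * (\<bar>c1\<bar> * r0 powr (1 - real CARD('n)))
                + gpoly a2 al2 N2 (\<bar>c2\<bar> * r0 powr (1 - real CARD('n))) * (\<bar>c2\<bar> * r0 powr (1 - real CARD('n)))"
    and d3: "d3 = (if c1 = 0 then 0 else gpoly_deriv a1 al1 N1 (\<bar>c1\<bar> * r0 powr (1 - real CARD('n))) * (\<bar>c1\<bar> * r0 powr (1 - real CARD('n))))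
                + (if c2 = 0 then 0 else gpoly_deriv a2 al2 N2 (\<bar>c2\<bar> * r0 powr (1 - real CARD('n))) * (\<bar>c2\<bar> * r0 powr (1 - real CARD('n))))"
    and d4: "d4 = d1 + d3"
    and mu1: "mu1 = Sup (Ffun pc' f1 ` {sl..sh}) + Sup (Ffun pc' f2 ` {sl..sh})"
    and mu2: "mu2 = Inf (Ffun pc' f1 ` {sl..sh}) + Inf (Ffun pc' f2 ` {sl..sh})"
    and mu3: "mu3 = Sup ((\<lambda>s. \<bar>deriv (Ffun pc' f1) s\<bar>) ` {sl..sh}) + Sup ((\<lambda>s. \<bar>deriv (Ffun pc' f2) s\<bar>) ` {sl..sh})"
    and C0: "C0 = d4 * mu1" and C1: "C1 = d0 * mu2" and C2: "C2 = d2 * mu3"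
    and kappa0: "kappa0 = C0 / (2 * C1)"
    and sR: "sR = kappa0 * (real CARD('n) + C2 * R)"
    and q: "q = kappa0 * C0 / (2 * sR)"
    and eta0: "eta0 = (r0 / R) powr (2 * sR)"
    and wC21: "C21 w U (q * R\<^sup>2)"
    and wcont: "continuous_on (closure (U \<times> {0<..q * R\<^sup>2})) (\<lambda>(x,t). w x t)"
    and Lw: "\<forall>x\<in>U. \<forall>t\<in>{0<..q * R\<^sup>2}.
        Lop (\<lambda>y. matrix_inv (Ffun pc' f1 (Shat (norm y)) *\<^sub>R Gjac (gpoly a1 al1 N1) (gpoly_deriv a1 al1 N1) (ustar c1 y)
                           + Ffun pc' f2 (Shat (norm y)) *\<^sub>R Gjac (gpoly a2 al2 N2) (gpoly_deriv a2 al2 N2) (ustar c2 y)))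
            (\<lambda>y. deriv (Ffun pc' f2) (Shat (norm y)) *\<^sub>R Gvec (gpoly a2 al2 N2) (ustar c2 y)
                 - deriv (Ffun pc' f1) (Shat (norm y)) *\<^sub>R Gvec (gpoly a1 al1 N1) (ustar c1 y))
            (q * R\<^sup>2) w x t \<le> 0"
    and wbdry: "\<forall>x\<in>frontier U. \<forall>t\<in>{0<..<q * R\<^sup>2}. w x t \<le> 0"
  shows "Sup (insert 0 ((\<lambda>x. w x (q * R\<^sup>2)) ` U))
           \<le> 1 / (1 + eta0) * Sup (insert 0 ((\<lambda>x. w x 0) ` U))"
proof -
  interpret bounded_setup a1 al1 a2 al2 N1 N2 f1 f2 pc' r0 c1 c2 R sl sh Shat U "CARD('n)"
    d0 d1 d2 d3 d4 mu1 mu2 mu3 C0 C1 C2 kappa0 sR q eta0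
    by unfold_locales (fact | simp)+
  have "Amat = (\<lambda>y. matrix_inv (Ffun pc' f1 (Shat (norm y)) *\<^sub>R Gjac (gpoly a1 al1 N1) (gpoly_deriv a1 al1 N1) (ustar c1 y)
      + Ffun pc' f2 (Shat (norm y)) *\<^sub>R Gjac (gpoly a2 al2 N2) (gpoly_deriv a2 al2 N2) (ustar c2 y)))"
    by (intro ext) (simp add: Amat_def Bmat_def)
  moreover have "bvec = (\<lambda>y. deriv (Ffun pc' f2) (Shat (norm y)) *\<^sub>R Gvec (gpoly a2 al2 N2) (ustar c2 y)
      - deriv (Ffun pc' f1) (Shat (norm y)) *\<^sub>R Gvec (gpoly a1 al1 N1) (ustar c1 y))"
    by (intro ext) (simp add: bvec_def)
  ultimately show ?thesis using decay_estimate[OF wC21 wcont _ wbdry] Lw by simp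
qed

end
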